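(* Let $M\subseteq\mathbb{C}^n$ and $S\subseteq\mathbb{C}^n$ be complex domains endowed with rotation invariant Kähler forms $\omega_\Phi$ and $\omega_\Xi$ with associated functions $\tilde\Phi:\tilde M\to\mathbb{R}$ and $\tilde\Xi:\tilde S\to\mathbb{R}$ respectively. A special map $\Psi:M\to S$, $\Psi(z)=(\tilde\psi_1(x)z_1,\dots,\tilde\psi_n(x)z_n)$, satisfies $\Psi^*(\omega_\Xi)=\omega_\Phi$ if and only if there exist constants $c_k\in\mathbb{R}$ such that on $\tilde M$ $$\tilde\psi_k^2\,\frac{\partial\tilde\Xi}{\partial x_k}(\tilde\psi_1^2x_1,\dots,\tilde\psi_n^2x_n)=\frac{\partial\tilde\Phi}{\partial x_k}+\frac{c_k}{x_k},\qquad k=1,\dots,n.$$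
   Context: Let $z_1,\dots,z_n$ be the standard complex coordinates on $\mathbb{C}^n$ and $x_j=|z_j|^2$. For a domain $M\subseteq\mathbb{C}^n$ set $\tilde M=\{x\in\mathbb{R}^n:\ x_j=|z_j|^2,\ z\in M\}$ (similarly $\tilde S$). A Kähler form $\omega_\Phi=\frac{i}{2}\partial\bar\partial\Phi$ on $M$ ($\Phi$ smooth real) is rotation invariant with associated function $\tilde\Phi$ if $\tilde\Phi:\tilde M\to\mathbb{R}$ is smooth and $\Phi(z)=\tilde\Phi(|z_1|^2,\dots,|z_n|^2)$. A special map $\Psi:M\to S$ is a smooth map of the form $\Psi(z)=(\tilde\psi_1(x)z_1,\dots,\tilde\psi_n(x)z_n)$ with $\tilde\psi_j:\tilde M\to\mathbb{R}$ real functions. *)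

theory Defs
  imports "HOL-Analysis.Analysis"
begin

text \<open>Points of C^n are modelled as complex^'n, points of R^n as real^'n
  (n = CARD('n), arbitrary and fixed).\<close>

definition is_domain :: "'a::topological_space set \<Rightarrow> bool" where
  "is_domain U \<longleftrightarrow> open U \<and> connected U \<and> U \<noteq> {}"

fun Ck_on :: "nat \<Rightarrow> 'a::real_normed_vector set \<Rightarrow> ('a \<Rightarrow> 'b::real_normed_vector) \<Rightarrow> bool" where
  "Ck_on 0 U f \<longleftrightarrow> continuous_on U f"
| "Ck_on (Suc k) U f \<longleftrightarrow> f differentiable_on U \<and>
      (\<forall>v. Ck_on k U (\<lambda>x. frechet_derivative f (at x) v))"

definition smooth_on :: "'a::real_normed_vector set \<Rightarrow> ('a \<Rightarrow> 'b::real_normed_vector) \<Rightarrow> bool" where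
  "smooth_on U f \<longleftrightarrow> (\<forall>k. Ck_on k U f)"

definition smooth_on_set :: "'a::real_normed_vector set \<Rightarrow> ('a \<Rightarrow> 'b::real_normed_vector) \<Rightarrow> bool" where
  "smooth_on_set A f \<longleftrightarrow> (\<exists>U g. open U \<and> A \<subseteq> U \<and> smooth_on U g \<and> (\<forall>x\<in>A. g x = f x))"

definition sqmod :: "complex^'n \<Rightarrow> real^'n" where
  "sqmod z = (\<chi> j. (cmod (z $ j))\<^sup>2)"

definition tilde :: "(complex^'n) set \<Rightarrow> (real^'n) set" where
  "tilde M = sqmod ` M"

definition rot_inv_assoc :: "(complex^'n) set \<Rightarrow> (complex^'n \<Rightarrow> real) \<Rightarrow> (real^'n \<Rightarrow> real) \<Rightarrow> bool" where
  "rot_inv_assoc M Phi Phit \<longleftrightarrow> smooth_on_set (tilde M) Phit \<and> (\<forall>z\<in>M. Phi z = Phit (sqmod z))"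

text \<open>Wirtinger derivatives of a complex-valued function on C^n
  (z_j = u_j + i v_j; d/dz_j = (d/du_j - i d/dv_j)/2, d/dzbar_j = (d/du_j + i d/dv_j)/2).\<close>
definition dz :: "'n \<Rightarrow> (complex^'n \<Rightarrow> complex) \<Rightarrow> complex^'n \<Rightarrow> complex" where
  "dz j f p = (frechet_derivative f (at p) (axis j 1) - \<i> * frechet_derivative f (at p) (axis j \<i>)) / 2"

definition dzbar :: "'n \<Rightarrow> (complex^'n \<Rightarrow> complex) \<Rightarrow> complex^'n \<Rightarrow> complex" where
  "dzbar j f p = (frechet_derivative f (at p) (axis j 1) + \<i> * frechet_derivative f (at p) (axis j \<i>)) / 2"

text \<open>The real 2-form omega_Phi = (i/2) d dbar Phi = (i/2) sum_{j,k} Phi_{j kbar} dz_j /\ dzbar_k,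
  evaluated at the point p on the real tangent vectors X, Y in C^n
  (dz_j /\ dzbar_k (X,Y) = X_j conj(Y_k) - Y_j conj(X_k)).  The value is real; Re is only a
  type conversion.\<close>
definition kahler_form :: "(complex^'n \<Rightarrow> real) \<Rightarrow> complex^'n \<Rightarrow> complex^'n \<Rightarrow> complex^'n \<Rightarrow> real" where
  "kahler_form Phi p X Y = Re ((\<i> / 2) * (\<Sum>j\<in>UNIV. \<Sum>k\<in>UNIV.
      dz j (dzbar k (\<lambda>q. complex_of_real (Phi q))) p *
      (X $ j * cnj (Y $ k) - Y $ j * cnj (X $ k))))"

text \<open>omega_Phi is a Kaehler form on M: the associated metric omega(X, JX) is positive definite.\<close>
definition is_kahler_on :: "(complex^'n) set \<Rightarrow> (complex^'n \<Rightarrow> real) \<Rightarrow> bool" where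
  "is_kahler_on M Phi \<longleftrightarrow> smooth_on M Phi \<and>
     (\<forall>p\<in>M. \<forall>X. X \<noteq> 0 \<longrightarrow> kahler_form Phi p X (\<chi> j. \<i> * X $ j) > 0)"

definition pullback :: "('a::real_normed_vector \<Rightarrow> 'b::real_normed_vector) \<Rightarrow> ('b \<Rightarrow> 'b \<Rightarrow> 'b \<Rightarrow> real)
     \<Rightarrow> 'a \<Rightarrow> 'a \<Rightarrow> 'a \<Rightarrow> real" where
  "pullback F w p X Y = w (F p) (frechet_derivative F (at p) X) (frechet_derivative F (at p) Y)"

definition special_map :: "('n \<Rightarrow> real^'n \<Rightarrow> real) \<Rightarrow> complex^'n \<Rightarrow> complex^'n" where
  "special_map psi z = (\<chi> j. complex_of_real (psi j (sqmod z)) * z $ j)"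

definition pdx :: "'n \<Rightarrow> (real^'n \<Rightarrow> real) \<Rightarrow> real^'n \<Rightarrow> real" where
  "pdx k f x = frechet_derivative f (at x) (axis k 1)"

end

theory Submission
  imports Defs
begin

text \<open>Both Kaehler forms are \<open>d d^c\<close> of their potentials up to the factor \<open>1/4\<close>, and
  pullback commutes with \<open>d\<close>. Off the coordinate hyperplanes, with \<open>\<theta>\<^sub>k\<close> the polar angle
  of \<open>z\<^sub>k\<close>, this gives \<open>\<Psi>\<^sup>*\<omega>\<^sub>\<Xi> - \<omega>\<^sub>\<Phi> = 1/2 \<Sum>\<^sub>k dh\<^sub>k \<and> d\<theta>\<^sub>k\<close>, where
  \<open>h\<^sub>k = \<psi>\<^sub>k\<^sup>2 x\<^sub>k \<partial>\<^sub>k\<Xi>(\<psi>\<^sup>2 x) - x\<^sub>k \<partial>\<^sub>k\<Phi>(x)\<close> is rotation invariant. Pairing with the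
  generators of the coordinate rotations shows that the forms agree iff every \<open>h\<^sub>k\<close> is
  locally constant, i.e. constant on the connected domain, which is the stated identity.
  Since \<open>\<Xi>\<close> is only determined on \<open>tilde S\<close>, one also needs \<open>\<Psi>\<close> to avoid the coordinate
  hyperplanes; positivity of \<open>\<omega>\<^sub>\<Phi>\<close> forces this on a dense set.\<close>

abbreviation fd :: "('a::real_normed_vector \<Rightarrow> 'b::real_normed_vector) \<Rightarrow> 'a \<Rightarrow> 'a \<Rightarrow> 'b" where
  "fd f x \<equiv> frechet_derivative f (at x)"

lemma has_derivative_fd: "f differentiable (at x) \<Longrightarrow> (f has_derivative fd f x) (at x)"
  using frechet_derivative_works by blast

lemma fd_eqI: "(f has_derivative f') (at x) \<Longrightarrow> fd f x = f'"
  using frechet_derivative_at by metis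

lemma differentiable_on_openD: "open U \<Longrightarrow> f differentiable_on U \<Longrightarrow> x \<in> U \<Longrightarrow> f differentiable (at x)"
  by (simp add: differentiable_on_eq_differentiable_at)

lemma fd_transform_within_open:
  assumes "open U" "x \<in> U" "\<And>y. y \<in> U \<Longrightarrow> f y = g y" "f differentiable (at x)"
  shows "fd g x = fd f x" "g differentiable (at x)"
proof -
  have "(g has_derivative fd f x) (at x)"
    using has_derivative_transform_within_open[OF has_derivative_fd[OF assms(4)] assms(1,2)] assms(3) by blast
  then show "fd g x = fd f x" "g differentiable (at x)"
    using fd_eqI differentiable_def by blast+
qed

lemma Ck_on_2_iff: "Ck_on 2 U f \<longleftrightarrow> f differentiable_on U \<and>
   (\<forall>v. (\<lambda>x. fd f x v) differentiable_on U \<and> (\<forall>w. continuous_on U (\<lambda>x. fd (\<lambda>y. fd f y v) x w)))"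
  by (simp add: numeral_2_eq_2)

lemma Ck_on_2_differentiableD:
  assumes "open U" "Ck_on 2 U f" "x \<in> U"
  shows "f differentiable (at x)" "(\<lambda>x. fd f x v) differentiable (at x)"
  using assms by (auto simp: Ck_on_2_iff differentiable_on_openD)

lemma smooth_on_imp_Ck_on: "smooth_on U f \<Longrightarrow> Ck_on k U f"
  by (simp add: smooth_on_def)

lemma Ck_on_cong:
  assumes "open U" "\<And>x. x \<in> U \<Longrightarrow> f x = g x" "Ck_on k U f"
  shows "Ck_on k U g"
  using assms(2,3)
proof (induction k arbitrary: f g)
  case 0
  then show ?case using continuous_on_cong by force
next
  case (Suc k)
  have df: "f differentiable_on U" using Suc.prems by simp
  have dg: "\<And>x. x \<in> U \<Longrightarrow> g differentiable (at x)" "\<And>x. x \<in> U \<Longrightarrow> fd g x = fd f x"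
    using fd_transform_within_open[OF assms(1) _ Suc.prems(1) differentiable_on_openD[OF assms(1) df]]
    by auto
  show ?case
  proof (simp only: Ck_on.simps, intro conjI allI)
    show "g differentiable_on U"
      using dg(1) assms(1) by (simp add: differentiable_on_eq_differentiable_at)
    fix v
    show "Ck_on k U (\<lambda>x. fd g x v)"
      by (rule Suc.IH[of "\<lambda>x. fd f x v"]) (use dg(2) Suc.prems in auto)
  qed
qed

lemma Ck_on_bounded_linear_compose:
  assumes L: "bounded_linear L" and U: "open U"
  shows "Ck_on k U f \<Longrightarrow> Ck_on k U (\<lambda>x. L (f x))"
proof (induction k arbitrary: f)
  case 0
  then show ?case using L by (auto intro: continuous_on_compose2[of UNIV L] linear_continuous_on)
next
  case (Suc k)
  have df: "\<And>x. x \<in> U \<Longrightarrow> f differentiable (at x)"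
    using Suc.prems differentiable_on_openD[OF U] by auto
  have hd: "\<And>x. x \<in> U \<Longrightarrow> ((\<lambda>x. L (f x)) has_derivative (\<lambda>h. L (fd f x h))) (at x)"
    using bounded_linear.has_derivative[OF L has_derivative_fd[OF df]] by blast
  show ?case
  proof (simp only: Ck_on.simps, intro conjI allI)
    show "(\<lambda>x. L (f x)) differentiable_on U"
      using hd U by (auto simp: differentiable_on_eq_differentiable_at differentiable_def)
    fix v
    have "Ck_on k U (\<lambda>x. L (fd f x v))" using Suc by simp
    then show "Ck_on k U (\<lambda>x. fd (\<lambda>x. L (f x)) x v)"
      by (rule Ck_on_cong[OF U, rotated]) (simp add: hd[THEN fd_eqI])
  qed
qed

subsection \<open>Symmetry of second derivatives\<close>

lemma has_real_derivative_along_line: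
  fixes g :: "'a::real_normed_vector \<Rightarrow> real"
  assumes "g differentiable (at (q + s *\<^sub>R v))"
  shows "((\<lambda>s. g (q + s *\<^sub>R v)) has_real_derivative fd g (q + s *\<^sub>R v) v) (at s)"
proof -
  have "((\<lambda>s. q + s *\<^sub>R v) has_derivative (\<lambda>t. t *\<^sub>R v)) (at s)"
    by (auto intro!: derivative_eq_intros)
  from has_derivative_compose[OF this has_derivative_fd[OF assms]]
  have "((\<lambda>s. g (q + s *\<^sub>R v)) has_derivative (\<lambda>t. fd g (q + s *\<^sub>R v) (t *\<^sub>R v))) (at s)" .
  moreover have "linear (fd g (q + s *\<^sub>R v))"
    using has_derivative_fd[OF assms] has_derivative_linear by blast
  ultimately show ?thesis
    by (simp add: linear_scale has_field_derivative_def mult_commute_abs)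
qed

text \<open>Two applications of the mean value theorem to the second difference
  \<open>f(p + hv + hw) - f(p + hv) - f(p + hw) + f(p)\<close>.\<close>

lemma second_difference_mean_value:
  fixes f :: "'a::real_normed_vector \<Rightarrow> real"
  assumes h: "h > 0"
    and inU: "\<And>s t. 0 \<le> s \<Longrightarrow> s \<le> h \<Longrightarrow> 0 \<le> t \<Longrightarrow> t \<le> h \<Longrightarrow> p + s *\<^sub>R v + t *\<^sub>R w \<in> U"
    and df: "\<And>x. x \<in> U \<Longrightarrow> f differentiable (at x)"
    and dv: "\<And>x. x \<in> U \<Longrightarrow> (\<lambda>x. fd f x v) differentiable (at x)"
  shows "\<exists>s t. 0 \<le> s \<and> s \<le> h \<and> 0 \<le> t \<and> t \<le> h \<and>
     f (p + h *\<^sub>R v + h *\<^sub>R w) - f (p + h *\<^sub>R v) - f (p + h *\<^sub>R w) + f p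
       = h * h * fd (\<lambda>y. fd f y v) (p + s *\<^sub>R v + t *\<^sub>R w) w"
proof -
  define \<phi> where "\<phi> s = f ((p + h *\<^sub>R w) + s *\<^sub>R v) - f (p + s *\<^sub>R v)" for s
  have "\<exists>z. 0 < z \<and> z < h \<and>
      \<phi> h - \<phi> 0 = (h - 0) * (fd f ((p + h *\<^sub>R w) + z *\<^sub>R v) v - fd f (p + z *\<^sub>R v) v)"
  proof (rule MVT2[OF h])
    fix x assume x: "0 \<le> x" "x \<le> h"
    have a: "(p + h *\<^sub>R w) + x *\<^sub>R v \<in> U" using inU[of x h] x h by (simp add: algebra_simps)
    have b: "p + x *\<^sub>R v \<in> U" using inU[of x 0] x h by simp
    show "(\<phi> has_real_derivative (fd f ((p + h *\<^sub>R w) + x *\<^sub>R v) v - fd f (p + x *\<^sub>R v) v)) (at x)"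
      unfolding \<phi>_def by (intro derivative_intros has_real_derivative_along_line df a b)
  qed
  then obtain s where s: "0 < s" "s < h"
    and s1: "\<phi> h - \<phi> 0 = h * (fd f ((p + h *\<^sub>R w) + s *\<^sub>R v) v - fd f (p + s *\<^sub>R v) v)"
    by auto
  define g where "g y = fd f y v" for y
  have "\<exists>z. 0 < z \<and> z < h \<and> g ((p + s *\<^sub>R v) + h *\<^sub>R w) - g ((p + s *\<^sub>R v) + 0 *\<^sub>R w)
       = (h - 0) * fd g ((p + s *\<^sub>R v) + z *\<^sub>R w) w"
  proof (rule MVT2[OF h])
    fix x assume x: "0 \<le> x" "x \<le> h"
    have a: "(p + s *\<^sub>R v) + x *\<^sub>R w \<in> U" using inU[of s x] x s by simp
    show "((\<lambda>x. g ((p + s *\<^sub>R v) + x *\<^sub>R w)) has_real_derivative fd g ((p + s *\<^sub>R v) + x *\<^sub>R w) w) (at x)"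
      by (rule has_real_derivative_along_line) (use dv[OF a] g_def in \<open>simp add: fun_eq_iff\<close>)
  qed
  then obtain t where t: "0 < t" "t < h"
    and t1: "g ((p + s *\<^sub>R v) + h *\<^sub>R w) - g (p + s *\<^sub>R v) = h * fd g ((p + s *\<^sub>R v) + t *\<^sub>R w) w"
    by auto
  have "f (p + h *\<^sub>R v + h *\<^sub>R w) - f (p + h *\<^sub>R v) - f (p + h *\<^sub>R w) + f p = \<phi> h - \<phi> 0"
    unfolding \<phi>_def by (simp add: algebra_simps)
  also have "\<dots> = h * (g ((p + s *\<^sub>R v) + h *\<^sub>R w) - g (p + s *\<^sub>R v))"
    unfolding s1 g_def by (simp add: algebra_simps)
  also have "\<dots> = h * h * fd (\<lambda>y. fd f y v) (p + s *\<^sub>R v + t *\<^sub>R w) w"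
    using t1 unfolding g_def by simp
  finally show ?thesis using s t by (intro exI[of _ s] exI[of _ t]) auto
qed

lemma mixed_second_derivatives_meet_nearby:
  fixes f :: "'a::real_normed_vector \<Rightarrow> real"
  assumes U: "open U" "p \<in> U" and d: "d > 0"
    and df: "\<And>x. x \<in> U \<Longrightarrow> f differentiable (at x)"
    and dv: "\<And>x. x \<in> U \<Longrightarrow> (\<lambda>x. fd f x v) differentiable (at x)"
    and dw: "\<And>x. x \<in> U \<Longrightarrow> (\<lambda>x. fd f x w) differentiable (at x)"
  shows "\<exists>q1 q2. dist q1 p < d \<and> dist q2 p < d \<and>
    fd (\<lambda>y. fd f y v) q1 w = fd (\<lambda>y. fd f y w) q2 v"
proof -
  obtain r where r: "r > 0" "ball p r \<subseteq> U" using U open_contains_ball by blast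
  define N where "N = norm v + norm w + 1"
  define h where "h = min r d / (2 * N)"
  have N: "N > 0" unfolding N_def by (simp add: add_nonneg_pos)
  have h: "h > 0" using d r N unfolding h_def by simp
  have hd: "h * (norm v + norm w) < min r d"
  proof -
    have "h * (norm v + norm w) \<le> h * N" using h unfolding N_def by simp
    also have "\<dots> = min r d / 2" using N unfolding h_def by simp
    finally show ?thesis using d r by simp
  qed
  have close: "dist (p + s *\<^sub>R a + t *\<^sub>R b) p < min r d"
    if "0 \<le> s" "s \<le> h" "0 \<le> t" "t \<le> h" "(a = v \<and> b = w) \<or> (a = w \<and> b = v)" for s t a b
  proof -
    have "dist (p + s *\<^sub>R a + t *\<^sub>R b) p \<le> s * norm a + t * norm b"
      using norm_triangle_ineq[of "s *\<^sub>R a" "t *\<^sub>R b"] that by (simp add: dist_norm)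
    also have "\<dots> \<le> h * norm a + h * norm b"
      using that by (intro add_mono mult_right_mono) auto
    also have "\<dots> = h * (norm v + norm w)"
      using that by (auto simp: algebra_simps)
    finally show ?thesis using hd by simp
  qed
  have inU: "p + s *\<^sub>R a + t *\<^sub>R b \<in> U"
    if "0 \<le> s" "s \<le> h" "0 \<le> t" "t \<le> h" "(a = v \<and> b = w) \<or> (a = w \<and> b = v)" for s t a b
    using close[OF that] r(2) by (auto simp: dist_commute)
  obtain s1 t1 where st1: "0 \<le> s1" "s1 \<le> h" "0 \<le> t1" "t1 \<le> h"
    and eq1: "f (p + h *\<^sub>R v + h *\<^sub>R w) - f (p + h *\<^sub>R v) - f (p + h *\<^sub>R w) + f p
       = h * h * fd (\<lambda>y. fd f y v) (p + s1 *\<^sub>R v + t1 *\<^sub>R w) w"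
    using second_difference_mean_value[OF h, of p v w U f] inU df dv by blast
  obtain s2 t2 where st2: "0 \<le> s2" "s2 \<le> h" "0 \<le> t2" "t2 \<le> h"
    and eq2: "f (p + h *\<^sub>R w + h *\<^sub>R v) - f (p + h *\<^sub>R w) - f (p + h *\<^sub>R v) + f p
       = h * h * fd (\<lambda>y. fd f y w) (p + s2 *\<^sub>R w + t2 *\<^sub>R v) v"
    using second_difference_mean_value[OF h, of p w v U f] inU df dw by blast
  have "p + h *\<^sub>R w + h *\<^sub>R v = p + h *\<^sub>R v + h *\<^sub>R w" by (simp add: algebra_simps)
  with eq1 eq2 h have "fd (\<lambda>y. fd f y v) (p + s1 *\<^sub>R v + t1 *\<^sub>R w) w
      = fd (\<lambda>y. fd f y w) (p + s2 *\<^sub>R w + t2 *\<^sub>R v) v"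
    by (simp add: algebra_simps)
  moreover have "dist (p + s1 *\<^sub>R v + t1 *\<^sub>R w) p < d" "dist (p + s2 *\<^sub>R w + t2 *\<^sub>R v) p < d"
    using close[OF st1, of v w] close[OF st2, of w v] by auto
  ultimately show ?thesis by blast
qed

lemma mixed_second_derivatives_eq:
  fixes f :: "'a::real_normed_vector \<Rightarrow> real"
  assumes U: "open U" "p \<in> U" and C: "Ck_on 2 U f"
  shows "fd (\<lambda>y. fd f y v) p w = fd (\<lambda>y. fd f y w) p v"
proof (rule ccontr)
  define E1 where "E1 x = fd (\<lambda>y. fd f y v) x w" for x
  define E2 where "E2 x = fd (\<lambda>y. fd f y w) x v" for x
  define e where "e = dist (E1 p) (E2 p) / 2"
  assume "fd (\<lambda>y. fd f y v) p w \<noteq> fd (\<lambda>y. fd f y w) p v"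
  then have e: "e > 0" by (simp add: e_def E1_def E2_def)
  have "isCont E1 p" "isCont E2 p"
    using C U unfolding E1_def E2_def by (simp_all add: Ck_on_2_iff continuous_on_eq_continuous_at)
  then obtain d1 d2 where d: "d1 > 0" "d2 > 0"
    and c1: "\<And>y. dist y p < d1 \<Longrightarrow> dist (E1 y) (E1 p) < e"
    and c2: "\<And>y. dist y p < d2 \<Longrightarrow> dist (E2 y) (E2 p) < e"
    using e unfolding continuous_at_eps_delta by metis
  obtain q1 q2 where q: "dist q1 p < min d1 d2" "dist q2 p < min d1 d2" "E1 q1 = E2 q2"
    using mixed_second_derivatives_meet_nearby[OF U, of "min d1 d2" f v w] d
      Ck_on_2_differentiableD[OF U(1) C] unfolding E1_def E2_def by auto
  have "dist (E1 q1) (E1 p) < e" "dist (E2 q2) (E2 p) < e"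
    using c1 c2 q(1,2) by auto
  moreover have "dist (E1 p) (E2 p) \<le> dist (E1 q1) (E1 p) + dist (E2 q2) (E2 p)"
    using dist_triangle2[of "E1 p" "E2 p" "E1 q1"] q(3) by (simp add: dist_commute)
  ultimately show False by (simp add: e_def)
qed

lemma mixed_second_derivatives_eq_euclidean:
  fixes f :: "'a::real_normed_vector \<Rightarrow> 'b::euclidean_space"
  assumes U: "open U" "p \<in> U" and C: "Ck_on 2 U f"
  shows "fd (\<lambda>y. fd f y v) p w = fd (\<lambda>y. fd f y w) p v"
proof (rule euclidean_eqI)
  fix b :: 'b
  have C2: "Ck_on 2 U (\<lambda>x. f x \<bullet> b)"
    using Ck_on_bounded_linear_compose[OF bounded_linear_inner_left U(1) C] .
  note df = Ck_on_2_differentiableD[OF U(1) C]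
  have fd_inner: "fd (\<lambda>y. g y \<bullet> b) x u = fd g x u \<bullet> b"
    if "g differentiable (at x)" for g :: "'a \<Rightarrow> 'b" and x u
    using fd_eqI[OF bounded_linear.has_derivative[OF bounded_linear_inner_left has_derivative_fd[OF that]]]
    by simp
  have "fd (\<lambda>y. fd (\<lambda>x. f x \<bullet> b) y u) p z = fd (\<lambda>y. fd f y u) p z \<bullet> b" for u z
  proof -
    have d1: "(\<lambda>y. fd f y u \<bullet> b) differentiable (at p)"
      using bounded_linear.has_derivative[OF bounded_linear_inner_left has_derivative_fd[OF df(2)[OF U(2)]]]
      unfolding differentiable_def by blast
    have "fd (\<lambda>y. fd (\<lambda>x. f x \<bullet> b) y u) p = fd (\<lambda>y. fd f y u \<bullet> b) p"
      by (rule fd_transform_within_open[OF U _ d1]) (simp add: fd_inner df)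
    then show ?thesis using fd_inner[OF df(2)[OF U(2)]] by simp
  qed
  then show "fd (\<lambda>y. fd f y v) p w \<bullet> b = fd (\<lambda>y. fd f y w) p v \<bullet> b"
    using mixed_second_derivatives_eq[OF U C2, of v w] by simp
qed

subsection \<open>The Kaehler form as an exterior derivative\<close>

definition cJ :: "complex^'n \<Rightarrow> complex^'n" where
  "cJ X = (\<chi> j. \<i> * X $ j)"

lemma cJ_nth [simp]: "cJ X $ j = \<i> * X $ j"
  by (simp add: cJ_def)

lemma linear_cJ: "linear cJ"
  by (rule linearI) (auto simp: vec_eq_iff algebra_simps scaleR_conv_of_real)

lemma bounded_linear_cJ: "bounded_linear cJ"
  using linear_cJ linear_conv_bounded_linear by blast

lemma cJ_axis: "cJ (axis k c) = axis k (\<i> * c)"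
  by (simp add: vec_eq_iff axis_def)

lemma kahler_form_zero_right [simp]: "kahler_form F p X 0 = 0"
  by (simp add: kahler_form_def)

definition dc :: "(complex^'n \<Rightarrow> real) \<Rightarrow> complex^'n \<Rightarrow> complex^'n \<Rightarrow> real" where
  "dc F z Y = - fd F z (cJ Y)"

text \<open>\<open>ext_deriv\<close> is the exterior derivative of a 1-form, evaluated on constant vector fields.\<close>

definition ext_deriv :: "('a::real_normed_vector \<Rightarrow> 'a \<Rightarrow> real) \<Rightarrow> 'a \<Rightarrow> 'a \<Rightarrow> 'a \<Rightarrow> real" where
  "ext_deriv \<alpha> p X Y = fd (\<lambda>z. \<alpha> z Y) p X - fd (\<lambda>z. \<alpha> z X) p Y"

definition pullback1 :: "('a::real_normed_vector \<Rightarrow> 'b::real_normed_vector) \<Rightarrow> ('b \<Rightarrow> 'b \<Rightarrow> real)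
    \<Rightarrow> 'a \<Rightarrow> 'a \<Rightarrow> real" where
  "pullback1 F \<alpha> z Y = \<alpha> (F z) (fd F z Y)"

lemma complex_vec_expansion:
  fixes X :: "complex^'n"
  shows "X = (\<Sum>j\<in>UNIV. Re (X$j) *\<^sub>R axis j 1 + Im (X$j) *\<^sub>R axis j \<i>)"
proof (subst vec_eq_iff, intro allI)
  fix i
  have "(\<Sum>j\<in>UNIV. Re (X$j) *\<^sub>R axis j 1 + Im (X$j) *\<^sub>R axis j \<i>) $ i
      = (\<Sum>j\<in>UNIV. if j = i then Re (X$j) *\<^sub>R 1 + Im (X$j) *\<^sub>R \<i> else 0)"
  proof -
    have "\<And>x. Re (X $ x) *\<^sub>R (if i = x then 1 else 0) + Im (X $ x) *\<^sub>R (if i = x then \<i> else 0)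
       = (if x = i then Re (X$x) *\<^sub>R 1 + Im (X$x) *\<^sub>R \<i> else 0)" by auto
    then show ?thesis by (simp add: axis_def)
  qed
  also have "\<dots> = X $ i" by (simp add: complex_eq_iff)
  finally show "X $ i = (\<Sum>j\<in>UNIV. Re (X$j) *\<^sub>R axis j 1 + Im (X$j) *\<^sub>R axis j \<i>) $ i" by simp
qed

lemma linear_complex_vec_expansion:
  fixes L :: "complex^'n \<Rightarrow> real"
  assumes "linear L"
  shows "L X = (\<Sum>j\<in>UNIV. Re (X$j) * L (axis j 1) + Im (X$j) * L (axis j \<i>))"
proof -
  have "L X = L (\<Sum>j\<in>UNIV. Re (X$j) *\<^sub>R axis j 1 + Im (X$j) *\<^sub>R axis j \<i>)"
    using complex_vec_expansion[of X] by simp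
  also have "\<dots> = (\<Sum>j\<in>UNIV. Re (X$j) * L (axis j 1) + Im (X$j) * L (axis j \<i>))"
    by (simp add: linear_sum[OF assms] linear_add[OF assms] linear_scale[OF assms])
  finally show ?thesis .
qed

lemma bilinear_complex_vec_expansion:
  fixes B :: "complex^'n \<Rightarrow> complex^'n \<Rightarrow> real"
  assumes l1: "\<And>C. linear (\<lambda>A. B A C)" and l2: "\<And>A. linear (B A)"
  shows "B A C = (\<Sum>j\<in>UNIV. \<Sum>k\<in>UNIV.
      Re (A$j) * Re (C$k) * B (axis j 1) (axis k 1) + Re (A$j) * Im (C$k) * B (axis j 1) (axis k \<i>)
    + Im (A$j) * Re (C$k) * B (axis j \<i>) (axis k 1) + Im (A$j) * Im (C$k) * B (axis j \<i>) (axis k \<i>))"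
proof -
  have "B A C = (\<Sum>j\<in>UNIV. Re (A$j) * B (axis j 1) C + Im (A$j) * B (axis j \<i>) C)"
    using linear_complex_vec_expansion[OF l1[of C], of A] by simp
  also have "\<dots> = (\<Sum>j\<in>UNIV. \<Sum>k\<in>UNIV.
      Re (A$j) * Re (C$k) * B (axis j 1) (axis k 1) + Re (A$j) * Im (C$k) * B (axis j 1) (axis k \<i>)
    + Im (A$j) * Re (C$k) * B (axis j \<i>) (axis k 1) + Im (A$j) * Im (C$k) * B (axis j \<i>) (axis k \<i>))"
    by (subst linear_complex_vec_expansion[OF l2], subst linear_complex_vec_expansion[OF l2])
       (simp add: sum_distrib_left sum.distrib algebra_simps)
  finally show ?thesis .
qed

lemma linear_fd_in_direction:
  fixes L :: "'a::real_normed_vector \<Rightarrow> 'b::real_normed_vector \<Rightarrow> 'c::real_normed_vector"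
  assumes U: "open U" "p \<in> U" and lin: "\<And>y. y \<in> U \<Longrightarrow> linear (L y)"
    and d: "\<And>v. (\<lambda>y. L y v) differentiable (at p)"
  shows "linear (\<lambda>v. fd (\<lambda>y. L y v) p A)"
proof (rule linearI)
  fix v w :: 'b and c :: real
  have "fd (\<lambda>y. L y (v + w)) p = fd (\<lambda>y. L y v + L y w) p"
    by (rule fd_transform_within_open[OF U _ differentiable_add[OF d d]]) (simp add: lin linear_add)
  also have "\<dots> = (\<lambda>h. fd (\<lambda>y. L y v) p h + fd (\<lambda>y. L y w) p h)"
    by (rule fd_eqI) (intro has_derivative_add has_derivative_fd d)
  finally show "fd (\<lambda>y. L y (v + w)) p A = fd (\<lambda>y. L y v) p A + fd (\<lambda>y. L y w) p A" by simp
  have "fd (\<lambda>y. L y (c *\<^sub>R v)) p = fd (\<lambda>y. c *\<^sub>R L y v) p"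
    by (rule fd_transform_within_open[OF U _ differentiable_scaleR[OF differentiable_const d]])
       (simp add: lin linear_scale)
  also have "\<dots> = (\<lambda>h. c *\<^sub>R fd (\<lambda>y. L y v) p h)"
    by (rule fd_eqI) (intro has_derivative_scaleR_right has_derivative_fd d)
  finally show "fd (\<lambda>y. L y (c *\<^sub>R v)) p A = c *\<^sub>R fd (\<lambda>y. L y v) p A" by simp
qed

lemma has_derivative_of_real_fd:
  assumes "f differentiable (at x)"
  shows "((\<lambda>q. complex_of_real (f q)) has_derivative (\<lambda>h. complex_of_real (fd f x h))) (at x)"
  using bounded_linear.has_derivative[OF bounded_linear_of_real has_derivative_fd[OF assms]] .

lemma dz_dzbar_eq_second_derivatives:
  fixes F :: "complex^'n \<Rightarrow> real"
  assumes U: "open U" "p \<in> U" and C: "Ck_on 2 U F"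
  shows "dz j (dzbar k (\<lambda>q. complex_of_real (F q))) p =
     (complex_of_real (fd (\<lambda>y. fd F y (axis k 1)) p (axis j 1))
      + \<i> * complex_of_real (fd (\<lambda>y. fd F y (axis k \<i>)) p (axis j 1))
      - \<i> * (complex_of_real (fd (\<lambda>y. fd F y (axis k 1)) p (axis j \<i>))
      + \<i> * complex_of_real (fd (\<lambda>y. fd F y (axis k \<i>)) p (axis j \<i>)))) / 4"
proof -
  note dF = Ck_on_2_differentiableD[OF U(1) C]
  define G where "G y = (1/2) * (complex_of_real (fd F y (axis k 1))
      + \<i> * complex_of_real (fd F y (axis k \<i>)))" for y
  have eqG: "\<And>y. y \<in> U \<Longrightarrow> G y = dzbar k (\<lambda>q. complex_of_real (F q)) y"
    by (simp add: G_def dzbar_def dF fd_eqI[OF has_derivative_of_real_fd])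
  have hG: "(G has_derivative (\<lambda>h. (1/2) * (complex_of_real (fd (\<lambda>y. fd F y (axis k 1)) p h)
      + \<i> * complex_of_real (fd (\<lambda>y. fd F y (axis k \<i>)) p h)))) (at p)"
    unfolding G_def
    by (intro has_derivative_mult_right has_derivative_add has_derivative_of_real_fd dF(2)[OF U(2)])
  have "fd (dzbar k (\<lambda>q. complex_of_real (F q))) p = fd G p"
    by (rule fd_transform_within_open[OF U eqG]) (use hG in \<open>auto simp: differentiable_def\<close>)
  then show ?thesis unfolding dz_def fd_eqI[OF hG] by (simp add: field_simps)
qed

lemma kahler_form_term_expansion:
  fixes aa ab ba bb :: real and Xj Xk Yj Yk :: complex
  shows "Re (\<i> / 2 * ((complex_of_real aa + \<i> * complex_of_real ab
        - \<i> * (complex_of_real ba + \<i> * complex_of_real bb)) / 4 * (Xj * cnj Yk - Yj * cnj Xk))) =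
   ((Re Yj * Re (\<i>*Xk) * aa + Re Yj * Im (\<i>*Xk) * ab + Im Yj * Re (\<i>*Xk) * ba + Im Yj * Im (\<i>*Xk) * bb)
  - (Re Xj * Re (\<i>*Yk) * aa + Re Xj * Im (\<i>*Yk) * ab + Im Xj * Re (\<i>*Yk) * ba + Im Xj * Im (\<i>*Yk) * bb)
  + (Re (\<i>*Xj) * Re Yk * aa + Re (\<i>*Xj) * Im Yk * ab + Im (\<i>*Xj) * Re Yk * ba + Im (\<i>*Xj) * Im Yk * bb)
  - (Re (\<i>*Yj) * Re Xk * aa + Re (\<i>*Yj) * Im Xk * ab + Im (\<i>*Yj) * Re Xk * ba + Im (\<i>*Yj) * Im Xk * bb)) / 8"
  by (simp add: field_simps)

text \<open>Writing \<open>B A D\<close> for the second derivative of \<open>F\<close> in directions \<open>A\<close>, \<open>D\<close>, the definition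
  of the Kaehler form expands to \<open>(B Y (JX) - B X (JY) + B (JX) Y - B (JY) X) / 8\<close>;
  symmetry of \<open>B\<close> halves it.\<close>

lemma kahler_form_eq_second_derivatives:
  fixes F :: "complex^'n \<Rightarrow> real"
  assumes U: "open U" "p \<in> U" and C: "Ck_on 2 U F"
  shows "kahler_form F p X Y = (fd (\<lambda>y. fd F y (cJ X)) p Y - fd (\<lambda>y. fd F y (cJ Y)) p X) / 4"
proof -
  define B where "B A D = fd (\<lambda>y. fd F y D) p A" for A D
  note dF = Ck_on_2_differentiableD[OF U(1) C]
  have l1: "linear (\<lambda>A. B A D)" for D
    unfolding B_def using has_derivative_linear[OF has_derivative_fd[OF dF(2)[OF U(2)]]] by simp
  have l2: "linear (B A)" for A
    unfolding B_def
    by (rule linear_fd_in_direction[OF U]) (use dF has_derivative_linear has_derivative_fd U in blast)+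
  have sym: "B A D = B D A" for A D
    unfolding B_def using mixed_second_derivatives_eq[OF U C] by simp
  note ex = bilinear_complex_vec_expansion[OF l1 l2]
  have "kahler_form F p X Y = (\<Sum>j\<in>UNIV. \<Sum>k\<in>UNIV. Re (\<i> / 2 * ((complex_of_real (B (axis j 1) (axis k 1))
      + \<i> * complex_of_real (B (axis j 1) (axis k \<i>))
      - \<i> * (complex_of_real (B (axis j \<i>) (axis k 1))
      + \<i> * complex_of_real (B (axis j \<i>) (axis k \<i>)))) / 4
        * (X$j * cnj (Y$k) - Y$j * cnj (X$k)))))"
    unfolding kahler_form_def dz_dzbar_eq_second_derivatives[OF U C] B_def
    by (simp add: sum_distrib_left mult.assoc)
  also have "\<dots> = (B Y (cJ X) - B X (cJ Y) + B (cJ X) Y - B (cJ Y) X) / 8"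
    unfolding ex[of Y "cJ X"] ex[of X "cJ Y"] ex[of "cJ X" Y] ex[of "cJ Y" X]
    by (simp only: kahler_form_term_expansion cJ_nth)
       (simp add: sum_subtractf[symmetric] sum.distrib[symmetric] sum_divide_distrib)
  also have "\<dots> = (B Y (cJ X) - B X (cJ Y)) / 4"
    using sym[of "cJ X" Y] sym[of "cJ Y" X] by simp
  finally show ?thesis by (simp add: B_def)
qed

lemma kahler_form_eq_ext_deriv_dc:
  fixes F :: "complex^'n \<Rightarrow> real"
  assumes U: "open U" "p \<in> U" and C: "Ck_on 2 U F"
  shows "kahler_form F p X Y = ext_deriv (dc F) p X Y / 4"
proof -
  have "fd (\<lambda>z. dc F z V) p = (\<lambda>h. - fd (\<lambda>z. fd F z (cJ V)) p h)" for V
    unfolding dc_def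
    by (intro fd_eqI has_derivative_minus has_derivative_fd Ck_on_2_differentiableD[OF U(1) C U(2)])
  then show ?thesis
    unfolding kahler_form_eq_second_derivatives[OF U C] ext_deriv_def by simp
qed

lemma linear_euclidean_expansion:
  fixes L :: "'a::euclidean_space \<Rightarrow> real"
  assumes "linear L"
  shows "L v = (\<Sum>b\<in>Basis. (v \<bullet> b) * L b)"
proof -
  have "L v = L (\<Sum>b\<in>Basis. (v \<bullet> b) *\<^sub>R b)" by (simp add: euclidean_representation)
  also have "\<dots> = (\<Sum>b\<in>Basis. (v \<bullet> b) * L b)"
    by (simp add: linear_sum[OF assms] linear_scale[OF assms])
  finally show ?thesis .
qed

lemma has_derivative_fd_along:
  fixes G V :: "'a::real_normed_vector \<Rightarrow> 'b::euclidean_space" and H :: "'b \<Rightarrow> real"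
  assumes M: "open M" "p \<in> M" and S: "open S" "\<And>z. z \<in> M \<Longrightarrow> G z \<in> S"
    and dH: "\<And>w. w \<in> S \<Longrightarrow> H differentiable (at w)"
    and dHv: "\<And>v. (\<lambda>w. fd H w v) differentiable (at (G p))"
    and dG: "(G has_derivative G') (at p)" and dV: "(V has_derivative V') (at p)"
  shows "((\<lambda>z. fd H (G z) (V z)) has_derivative
     (\<lambda>X. fd (\<lambda>w. fd H w (V p)) (G p) (G' X) + fd H (G p) (V' X))) (at p)"
proof -
  have linH: "\<And>w. w \<in> S \<Longrightarrow> linear (fd H w)"
    using dH has_derivative_fd has_derivative_linear by blast
  have Gp: "G p \<in> S" using S M by blast
  have "((\<lambda>z. \<Sum>b\<in>Basis. (V z \<bullet> b) * fd H (G z) b) has_derivative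
      (\<lambda>X. \<Sum>b\<in>Basis. (V p \<bullet> b) * fd (\<lambda>w. fd H w b) (G p) (G' X) + (V' X \<bullet> b) * fd H (G p) b)) (at p)"
  proof (rule has_derivative_sum)
    fix b :: 'b
    have "((\<lambda>z. V z \<bullet> b) has_derivative (\<lambda>X. V' X \<bullet> b)) (at p)"
      using bounded_linear.has_derivative[OF bounded_linear_inner_left dV] .
    moreover have "((\<lambda>z. fd H (G z) b) has_derivative (\<lambda>X. fd (\<lambda>w. fd H w b) (G p) (G' X))) (at p)"
      using has_derivative_compose[OF dG has_derivative_fd[OF dHv[of b]]] by simp
    ultimately show "((\<lambda>z. (V z \<bullet> b) * fd H (G z) b) has_derivative
      (\<lambda>X. (V p \<bullet> b) * fd (\<lambda>w. fd H w b) (G p) (G' X) + (V' X \<bullet> b) * fd H (G p) b)) (at p)"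
      by (rule has_derivative_eq_rhs[OF has_derivative_mult]) (simp add: fun_eq_iff algebra_simps)
  qed
  then have "((\<lambda>z. fd H (G z) (V z)) has_derivative
      (\<lambda>X. \<Sum>b\<in>Basis. (V p \<bullet> b) * fd (\<lambda>w. fd H w b) (G p) (G' X) + (V' X \<bullet> b) * fd H (G p) b)) (at p)"
    by (rule has_derivative_transform_within_open[OF _ M])
       (simp add: linear_euclidean_expansion[OF linH] S)
  moreover have "(\<Sum>b\<in>Basis. (V p \<bullet> b) * fd (\<lambda>w. fd H w b) (G p) (G' X) + (V' X \<bullet> b) * fd H (G p) b)
      = fd (\<lambda>w. fd H w (V p)) (G p) (G' X) + fd H (G p) (V' X)" for X
  proof -
    have "linear (\<lambda>v. fd (\<lambda>w. fd H w v) (G p) (G' X))"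
      by (rule linear_fd_in_direction[OF S(1) Gp linH dHv])
    then show ?thesis
      using linear_euclidean_expansion[of _ "V p"] linear_euclidean_expansion[OF linH[OF Gp], of "V' X"]
      by (simp add: sum.distrib)
  qed
  ultimately show ?thesis by simp
qed

lemma has_derivative_pullback1_dc:
  fixes Psi :: "complex^'n \<Rightarrow> complex^'n" and Xi :: "complex^'n \<Rightarrow> real"
  assumes M: "open M" "p \<in> M" and S: "open S" and CP: "Ck_on 2 M Psi" and CX: "Ck_on 2 S Xi"
    and inS: "\<And>z. z \<in> M \<Longrightarrow> Psi z \<in> S"
  shows "((\<lambda>z. pullback1 Psi (dc Xi) z Y) has_derivative
     (\<lambda>X. - (fd (\<lambda>w. fd Xi w (cJ (fd Psi p Y))) (Psi p) (fd Psi p X)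
              + fd Xi (Psi p) (cJ (fd (\<lambda>z. fd Psi z Y) p X))))) (at p)"
proof -
  note dP = Ck_on_2_differentiableD[OF M(1) CP M(2)]
  note dX = Ck_on_2_differentiableD[OF S CX]
  have dV: "((\<lambda>z. cJ (fd Psi z Y)) has_derivative (\<lambda>X. cJ (fd (\<lambda>z. fd Psi z Y) p X))) (at p)"
    using bounded_linear.has_derivative[OF bounded_linear_cJ has_derivative_fd[OF dP(2)]] .
  show ?thesis
    using has_derivative_minus[OF has_derivative_fd_along[OF M S inS dX(1) dX(2)[OF inS[OF M(2)]]
        has_derivative_fd[OF dP(1)] dV]]
    by (simp add: pullback1_def dc_def)
qed

text \<open>The second derivative of \<open>\<Psi>\<close> drops out by symmetry.\<close>

lemma pullback_kahler_form_eq_ext_deriv: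
  fixes Psi :: "complex^'n \<Rightarrow> complex^'n" and Xi :: "complex^'n \<Rightarrow> real"
  assumes M: "open M" "p \<in> M" and S: "open S" and CP: "Ck_on 2 M Psi" and CX: "Ck_on 2 S Xi"
    and inS: "\<And>z. z \<in> M \<Longrightarrow> Psi z \<in> S"
  shows "pullback Psi (kahler_form Xi) p X Y = ext_deriv (pullback1 Psi (dc Xi)) p X Y / 4"
proof -
  have sym: "fd (\<lambda>z. fd Psi z Y) p X = fd (\<lambda>z. fd Psi z X) p Y"
    using mixed_second_derivatives_eq_euclidean[OF M CP] by simp
  have deriv: "fd (\<lambda>z. pullback1 Psi (dc Xi) z V) p W =
     - (fd (\<lambda>w. fd Xi w (cJ (fd Psi p V))) (Psi p) (fd Psi p W)
        + fd Xi (Psi p) (cJ (fd (\<lambda>z. fd Psi z V) p W)))" for V W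
    using fd_eqI[OF has_derivative_pullback1_dc[OF M S CP CX inS, of V]] by simp
  show ?thesis
    unfolding pullback_def kahler_form_eq_second_derivatives[OF S inS[OF M(2)] CX] ext_deriv_def
      deriv sym
    by (simp add: algebra_simps)
qed

lemma sqmod_nth [simp]: "sqmod z $ k = (cmod (z $ k))\<^sup>2"
  by (simp add: sqmod_def)

lemma real_vec_expansion: "(w::real^'n) = (\<Sum>k\<in>UNIV. w$k *\<^sub>R axis k 1)"
proof (subst vec_eq_iff, intro allI)
  fix i
  have "\<And>x. w $ x *\<^sub>R (axis x (1::real) $ i) = (if x = i then w $ x else 0)"
    by (auto simp: axis_def)
  then show "w $ i = (\<Sum>k\<in>UNIV. w$k *\<^sub>R axis k 1) $ i" by simp
qed

lemma linear_real_vec_expansion: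
  fixes L :: "real^'n \<Rightarrow> real"
  assumes "linear L"
  shows "L w = (\<Sum>k\<in>UNIV. w$k * L (axis k 1))"
proof -
  have "L w = L (\<Sum>k\<in>UNIV. w$k *\<^sub>R axis k 1)" using real_vec_expansion[of w] by simp
  also have "\<dots> = (\<Sum>k\<in>UNIV. w$k * L (axis k 1))"
    by (simp add: linear_sum[OF assms] linear_scale[OF assms])
  finally show ?thesis .
qed

lemma has_derivative_cmod_nth_power2:
  "((\<lambda>z::complex^'n. (cmod (z$k))\<^sup>2) has_derivative (\<lambda>X. 2 * Re (cnj (z$k) * X$k))) (at z)"
proof -
  have bR: "bounded_linear (\<lambda>z::complex^'n. Re (z$k))"
    by (rule bounded_linear_compose[OF bounded_linear_Re bounded_linear_vec_nth])
  have bI: "bounded_linear (\<lambda>z::complex^'n. Im (z$k))"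
    by (rule bounded_linear_compose[OF bounded_linear_Im bounded_linear_vec_nth])
  have "((\<lambda>z::complex^'n. (Re (z$k))\<^sup>2 + (Im (z$k))\<^sup>2) has_derivative
      (\<lambda>X. 2 * Re (cnj (z$k) * X$k))) (at z)"
    by (rule has_derivative_eq_rhs[OF has_derivative_add[OF
          has_derivative_power[OF bounded_linear_imp_has_derivative[OF bR], of 2]
          has_derivative_power[OF bounded_linear_imp_has_derivative[OF bI], of 2]]])
       (simp add: fun_eq_iff algebra_simps)
  then show ?thesis by (simp add: cmod_power2)
qed

lemma differentiable_sqmod_nth: "(\<lambda>z::complex^'n. sqmod z $ k) differentiable (at z)"
  using has_derivative_cmod_nth_power2 by (auto simp: differentiable_def)

definition dsqmod :: "complex^'n \<Rightarrow> complex^'n \<Rightarrow> real^'n" where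
  "dsqmod z X = (\<chi> k. 2 * Re (cnj (z$k) * X$k))"

lemma has_derivative_sqmod: "(sqmod has_derivative dsqmod z) (at z)"
proof -
  have e: "sqmod = (\<lambda>z. \<Sum>k\<in>UNIV. (cmod (z$k))\<^sup>2 *\<^sub>R axis k (1::real))"
    by (rule ext, subst real_vec_expansion) simp
  have "(sqmod has_derivative
        (\<lambda>X. \<Sum>k\<in>UNIV. (2 * Re (cnj (z$k) * X$k)) *\<^sub>R axis k (1::real))) (at z)"
    unfolding e by (intro has_derivative_sum has_derivative_scaleR_left has_derivative_cmod_nth_power2)
  moreover have "(\<lambda>X. \<Sum>k\<in>UNIV. (2 * Re (cnj (z$k) * X$k)) *\<^sub>R axis k (1::real)) = dsqmod z"
    by (rule ext, subst (2) real_vec_expansion) (simp add: dsqmod_def)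
  ultimately show ?thesis by simp
qed

lemma differentiable_sqmod: "sqmod differentiable (at z)"
  using has_derivative_sqmod differentiable_def by blast

lemma Im_cnj_mult: "(z::complex) \<noteq> 0 \<Longrightarrow> Im (cnj z * X) = (cmod z)\<^sup>2 * Im (X / z)"
  by (simp add: complex_div_cnj[of X z] mult.commute)

lemma dc_rotation_invariant:
  fixes F :: "complex^'n \<Rightarrow> real" and g :: "real^'n \<Rightarrow> real"
  assumes U: "open U" "z \<in> U" and eqF: "\<And>z. z \<in> U \<Longrightarrow> F z = g (sqmod z)"
    and dg: "g differentiable (at (sqmod z))"
  shows "dc F z X = (\<Sum>k\<in>UNIV. 2 * pdx k g (sqmod z) * Im (cnj (z$k) * X$k))"
proof -
  have "((\<lambda>z. g (sqmod z)) has_derivative (\<lambda>V. fd g (sqmod z) (dsqmod z V))) (at z)"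
    using has_derivative_compose[OF has_derivative_sqmod has_derivative_fd[OF dg]] by simp
  then have hF: "(F has_derivative (\<lambda>V. fd g (sqmod z) (dsqmod z V))) (at z)"
    by (rule has_derivative_transform_within_open[OF _ U]) (simp add: eqF)
  have lin: "linear (fd g (sqmod z))" using has_derivative_fd[OF dg] has_derivative_linear by blast
  have "dc F z X = - (\<Sum>k\<in>UNIV. dsqmod z (cJ X) $ k * pdx k g (sqmod z))"
    unfolding dc_def fd_eqI[OF hF] linear_real_vec_expansion[OF lin, of "dsqmod z (cJ X)"] pdx_def
    by simp
  also have "\<dots> = (\<Sum>k\<in>UNIV. 2 * pdx k g (sqmod z) * Im (cnj (z$k) * X$k))"
    by (simp add: dsqmod_def sum_negf[symmetric] algebra_simps)
  finally show ?thesis .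
qed

lemma has_derivative_Im_divide_nth:
  fixes p :: "complex^'n"
  assumes "p$k \<noteq> 0"
  shows "((\<lambda>z. Im (Y$k / z$k)) has_derivative (\<lambda>X. Im (- (Y$k * X$k) / (p$k * p$k)))) (at p)"
proof -
  have "((\<lambda>z. Y$k / z$k) has_derivative (\<lambda>X. (0 * p$k - Y$k * X$k) / (p$k * p$k))) (at p)"
    by (rule has_derivative_divide'[OF has_derivative_const
          bounded_linear_imp_has_derivative[OF bounded_linear_vec_nth] assms])
  from bounded_linear.has_derivative[OF bounded_linear_Im this] show ?thesis by simp
qed

text \<open>Off the coordinate hyperplanes, \<open>Im (Y$k / z$k)\<close> is \<open>d\<theta>\<^sub>k Y\<close> for the polar
  angle \<open>\<theta>\<^sub>k\<close> of \<open>z$k\<close>, so this is \<open>d (2 \<Sum>\<^sub>k H\<^sub>k d\<theta>\<^sub>k) = 2 \<Sum>\<^sub>k dH\<^sub>k \<and> d\<theta>\<^sub>k\<close>.\<close>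

lemma ext_deriv_angular_form:
  fixes \<alpha> :: "complex^'n \<Rightarrow> complex^'n \<Rightarrow> real" and H :: "'n \<Rightarrow> complex^'n \<Rightarrow> real"
  assumes W: "open W" "p \<in> W" and nz: "\<And>k. p$k \<noteq> 0"
    and eq: "\<And>z Y. z \<in> W \<Longrightarrow> \<alpha> z Y = (\<Sum>k\<in>UNIV. 2 * H k z * Im (Y$k / z$k))"
    and dH: "\<And>k. H k differentiable (at p)"
  shows "ext_deriv \<alpha> p X Y =
     2 * (\<Sum>k\<in>UNIV. fd (H k) p X * Im (Y$k / p$k) - fd (H k) p Y * Im (X$k / p$k))"
proof -
  have "fd (\<lambda>z. \<alpha> z V) p = (\<lambda>h. \<Sum>k\<in>UNIV. 2 * H k p * Im (- (V$k * h$k) / (p$k * p$k))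
      + 2 * fd (H k) p h * Im (V$k / p$k))" for V
  proof (rule fd_eqI)
    have "((\<lambda>z. \<Sum>k\<in>UNIV. 2 * H k z * Im (V$k / z$k)) has_derivative
      (\<lambda>h. \<Sum>k\<in>UNIV. 2 * H k p * Im (- (V$k * h$k) / (p$k * p$k))
      + 2 * fd (H k) p h * Im (V$k / p$k))) (at p)"
      by (intro has_derivative_sum has_derivative_eq_rhs[OF has_derivative_mult[OF
            has_derivative_mult_right[OF has_derivative_fd[OF dH]] has_derivative_Im_divide_nth[OF nz]]])
         (simp add: fun_eq_iff)
    then show "((\<lambda>z. \<alpha> z V) has_derivative
      (\<lambda>h. \<Sum>k\<in>UNIV. 2 * H k p * Im (- (V$k * h$k) / (p$k * p$k))
      + 2 * fd (H k) p h * Im (V$k / p$k))) (at p)"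
      by (rule has_derivative_transform_within_open[OF _ W]) (simp add: eq)
  qed
  then have "ext_deriv \<alpha> p X Y =
    (\<Sum>k\<in>UNIV. (2 * H k p * Im (- (Y$k * X$k) / (p$k * p$k)) + 2 * fd (H k) p X * Im (Y$k / p$k))
      - (2 * H k p * Im (- (X$k * Y$k) / (p$k * p$k)) + 2 * fd (H k) p Y * Im (X$k / p$k)))"
    unfolding ext_deriv_def by (simp only: sum_subtractf)
  also have "\<dots> = (\<Sum>k\<in>UNIV. 2 * (fd (H k) p X * Im (Y$k / p$k) - fd (H k) p Y * Im (X$k / p$k)))"
    by (rule sum.cong) (simp_all add: mult.commute right_diff_distrib)
  finally show ?thesis by (simp add: sum_distrib_left)
qed

definition rot :: "'n \<Rightarrow> real \<Rightarrow> complex^'n \<Rightarrow> complex^'n" where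
  "rot k t z = z + axis k ((cis t - 1) * z$k)"

lemma rot_nth: "rot k t z $ j = (if j = k then cis t * z$k else z$j)"
  by (simp add: rot_def axis_def algebra_simps)

lemma rot_0 [simp]: "rot k 0 z = z"
  by (simp add: rot_def)

lemma sqmod_rot [simp]: "sqmod (rot k t z) = sqmod z"
  by (simp add: vec_eq_iff rot_nth norm_mult)

lemma special_map_rot: "special_map psi (rot k t z) = rot k t (special_map psi z)"
  by (simp add: vec_eq_iff rot_nth special_map_def)

lemma bounded_linear_axis: "bounded_linear (axis k :: complex \<Rightarrow> complex^'n)"
proof -
  have "linear (axis k :: complex \<Rightarrow> complex^'n)"
    by (rule linearI) (auto simp: vec_eq_iff axis_def)
  then show ?thesis using linear_conv_bounded_linear by blast
qed

lemma has_derivative_rot: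
  "((\<lambda>t. rot k t z) has_derivative (\<lambda>s. s *\<^sub>R axis k (\<i> * z$k))) (at 0)"
proof -
  have c0: "((\<lambda>t. cis t) has_derivative (\<lambda>s. s *\<^sub>R (\<i> * cis 0))) (at 0)"
    using has_derivative_cis[OF has_derivative_ident[of "at (0::real)"]] by simp
  have c: "((\<lambda>t. (cis t - 1) * z$k) has_derivative (\<lambda>s. (s *\<^sub>R (\<i> * cis 0)) * z$k)) (at 0)"
    using has_derivative_mult_left[OF has_derivative_diff[OF c0 has_derivative_const[of 1]], of "z$k"]
    by simp
  have "((\<lambda>t. z + axis k ((cis t - 1) * z$k)) has_derivative
      (\<lambda>s. 0 + axis k ((s *\<^sub>R (\<i> * cis 0)) * z$k))) (at 0)"
    by (intro has_derivative_add has_derivative_const bounded_linear.has_derivative[OF bounded_linear_axis c])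
  moreover have "(\<lambda>s. 0 + axis k ((s *\<^sub>R (\<i> * cis 0)) * z$k)) = (\<lambda>s. s *\<^sub>R axis k (\<i> * z$k))"
    by (auto simp: fun_eq_iff vec_eq_iff axis_def)
  ultimately show ?thesis by (simp add: rot_def)
qed

lemma fd_rotation_invariant:
  assumes "H differentiable (at p)" "\<And>t. H (rot k t p) = H p"
  shows "fd H p (axis k (\<i> * p$k)) = 0"
proof -
  have "((\<lambda>t. H (rot k t p)) has_derivative (\<lambda>s. fd H p (s *\<^sub>R axis k (\<i> * p$k)))) (at 0)"
    using has_derivative_compose[OF has_derivative_rot has_derivative_fd] assms(1) by simp
  moreover have "((\<lambda>t. H (rot k t p)) has_derivative (\<lambda>s. 0)) (at 0)"
    using assms(2) by simp
  ultimately have "(\<lambda>s. fd H p (s *\<^sub>R axis k (\<i> * p$k))) = (\<lambda>s. 0)"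
    using has_derivative_unique by blast
  then show ?thesis by (metis scaleR_one)
qed

lemma fd_special_map_rotation:
  assumes "special_map psi differentiable (at p)"
  shows "fd (special_map psi) p (axis k (\<i> * p$k)) = axis k (\<i> * special_map psi p $ k)"
proof -
  have "special_map psi differentiable (at (rot k 0 p))" using assms by simp
  from has_derivative_compose[OF has_derivative_rot has_derivative_fd[OF this]]
  have "((\<lambda>t. special_map psi (rot k t p)) has_derivative
      (\<lambda>s. fd (special_map psi) (rot k 0 p) (s *\<^sub>R axis k (\<i> * p$k)))) (at 0)" .
  moreover have "((\<lambda>t. special_map psi (rot k t p)) has_derivative
      (\<lambda>s. s *\<^sub>R axis k (\<i> * special_map psi p $ k))) (at 0)"
    unfolding special_map_rot by (rule has_derivative_rot)
  ultimately have "(\<lambda>s. fd (special_map psi) (rot k 0 p) (s *\<^sub>R axis k (\<i> * p$k)))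
      = (\<lambda>s. s *\<^sub>R axis k (\<i> * special_map psi p $ k))"
    by (rule has_derivative_unique)
  then have "fd (special_map psi) p (1 *\<^sub>R axis k (\<i> * p$k)) = 1 *\<^sub>R axis k (\<i> * special_map psi p $ k)"
    unfolding rot_0 by meson
  then show ?thesis by simp
qed

lemma continuous_on_vec_nth:
  fixes A :: "'a::topological_space \<Rightarrow> 'b::real_normed_vector^'n"
  shows "continuous_on M A \<Longrightarrow> continuous_on M (\<lambda>p. A p $ j)"
  using continuous_on_compose2[OF linear_continuous_on[OF bounded_linear_vec_nth[of j]], of M A] by blast

lemma continuous_on_kahler_form:
  fixes F :: "complex^'n \<Rightarrow> real" and G A B :: "'a::topological_space \<Rightarrow> complex^'n"
  assumes U: "open U" "Ck_on 2 U F" and G: "continuous_on M G" "G ` M \<subseteq> U"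
    and cA: "continuous_on M A" and cB: "continuous_on M B"
  shows "continuous_on M (\<lambda>p. kahler_form F (G p) (A p) (B p))"
proof -
  define W where "W j k w = (complex_of_real (fd (\<lambda>y. fd F y (axis k 1)) w (axis j 1))
      + \<i> * complex_of_real (fd (\<lambda>y. fd F y (axis k \<i>)) w (axis j 1))
      - \<i> * (complex_of_real (fd (\<lambda>y. fd F y (axis k 1)) w (axis j \<i>))
      + \<i> * complex_of_real (fd (\<lambda>y. fd F y (axis k \<i>)) w (axis j \<i>)))) / 4" for j k w
  have c2: "continuous_on U (\<lambda>y. fd (\<lambda>y. fd F y v) y u)" for u v
    using U by (simp add: Ck_on_2_iff)
  have "continuous_on U (W j k)" for j k
    unfolding W_def by (intro continuous_intros c2) simp
  then have cWG: "continuous_on M (\<lambda>p. W j k (G p))" for j k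
    using continuous_on_compose2 G by blast
  have eq: "kahler_form F (G p) (A p) (B p) = Re ((\<i> / 2) * (\<Sum>j\<in>UNIV. \<Sum>k\<in>UNIV.
      W j k (G p) * (A p $ j * cnj (B p $ k) - B p $ j * cnj (A p $ k))))" if "p \<in> M" for p
    using that G(2) unfolding kahler_form_def W_def
    by (simp add: dz_dzbar_eq_second_derivatives[OF U(1) _ U(2)] image_subset_iff)
  show ?thesis
    by (subst continuous_on_cong[OF refl eq])
       (assumption, intro continuous_intros cWG continuous_on_vec_nth cA cB)
qed

lemma nonzero_coordinates_dense:
  fixes z :: "complex^'n"
  assumes U: "open U" "z \<in> U" and e: "e > 0"
  shows "\<exists>z'\<in>U. (\<forall>j. z'$j \<noteq> 0) \<and> dist z' z < e"
proof -
  obtain r where r: "r > 0" "ball z r \<subseteq> U" using U open_contains_ball by blast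
  define one :: "complex^'n" where "one = (\<chi> j. 1)"
  have n1: "norm one > 0" by (simp add: one_def vec_eq_iff)
  define d where "d = min r e / norm one"
  have d: "d > 0" using r e n1 by (simp add: d_def)
  have "infinite ({0<..<d} - (\<lambda>j. - Re (z$j)) ` UNIV)"
    using Diff_infinite_finite[of "(\<lambda>j. - Re (z$j)) ` UNIV" "{0<..<d}"] d by simp
  then obtain t where t: "t \<in> {0<..<d}" "t \<notin> (\<lambda>j. - Re (z$j)) ` UNIV"
    using infinite_imp_nonempty by blast
  define z' where "z' = z + t *\<^sub>R one"
  have nz: "z'$j \<noteq> 0" for j
  proof
    assume "z'$j = 0"
    then have "Re (z$j) + t = 0"
      by (metis Re_complex_of_real plus_complex.sel(1) zero_complex.sel(1)
          z'_def one_def of_real_def vec_lambda_beta vector_add_component vector_scaleR_component mult_1_right)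
    then have "t = - Re (z$j)" by simp
    with t(2) show False by auto
  qed
  have "dist z' z = t * norm one" using t by (simp add: z'_def dist_norm)
  also have "\<dots> < d * norm one" using t n1 by simp
  also have "\<dots> = min r e" using n1 by (simp add: d_def)
  finally have "dist z' z < min r e" .
  with r nz show ?thesis by (auto simp: dist_commute intro!: bexI[of _ z'])
qed

lemma continuous_on_eq_on_dense:
  fixes f g :: "'a::metric_space \<Rightarrow> real"
  assumes U: "open U" and cf: "continuous_on U f" and cg: "continuous_on U g"
    and dense: "\<And>z e. z \<in> U \<Longrightarrow> e > 0 \<Longrightarrow> \<exists>z'. P z' \<and> z' \<in> U \<and> dist z' z < e"
    and eq: "\<And>z. z \<in> U \<Longrightarrow> P z \<Longrightarrow> f z = g z"
    and z: "z \<in> U"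
  shows "f z = g z"
proof (rule ccontr)
  assume ne: "f z \<noteq> g z"
  have c: "isCont (\<lambda>x. f x - g x) z" using cf cg U z
    by (simp add: continuous_on_eq_continuous_at continuous_diff)
  obtain d where d: "d > 0" "\<And>y. dist y z < d \<Longrightarrow> dist (f y - g y) (f z - g z) < \<bar>f z - g z\<bar>"
    using c ne unfolding continuous_at_eps_delta by (metis zero_less_abs_iff right_minus_eq)
  obtain z' where z': "P z'" "z' \<in> U" "dist z' z < d" using dense[OF z d(1)] by blast
  have "dist (f z' - g z') (f z - g z) < \<bar>f z - g z\<bar>" using d(2) z'(3) .
  with eq[OF z'(2,1)] show False by (simp add: dist_real_def)
qed

lemma finite_if_at_most_one: "(\<And>x y. x \<in> A \<Longrightarrow> y \<in> A \<Longrightarrow> x = y) \<Longrightarrow> finite A"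
  by (metis finite.simps is_singletonI' is_singleton_the_elem)

text \<open>A segment starting off the coordinate hyperplanes meets them only finitely often,
  so a vanishing derivative there suffices for the mean value argument.\<close>

lemma constant_along_segment:
  fixes f :: "complex^'n \<Rightarrow> real"
  assumes B: "convex B" and cf: "continuous_on B f"
    and der: "\<And>q. q \<in> B \<Longrightarrow> (\<forall>j. q$j \<noteq> 0) \<Longrightarrow> (f has_derivative (\<lambda>_. 0)) (at q)"
    and q: "q1 \<in> B" "q2 \<in> B" "\<forall>j. q1$j \<noteq> 0"
  shows "f q2 = f q1"
proof -
  define \<gamma> where "\<gamma> t = q1 + t *\<^sub>R (q2 - q1)" for t :: real
  define K where "K = (\<Union>j. {t. \<gamma> t $ j = 0})"
  have "finite {t. \<gamma> t $ j = 0}" for j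
  proof (rule finite_if_at_most_one)
    fix t1 t2 assume "t1 \<in> {t. \<gamma> t $ j = 0}" "t2 \<in> {t. \<gamma> t $ j = 0}"
    then have a: "q1$j + t1 *\<^sub>R (q2$j - q1$j) = 0" "q1$j + t2 *\<^sub>R (q2$j - q1$j) = 0"
      by (auto simp: \<gamma>_def)
    have "(t1 - t2) *\<^sub>R (q2$j - q1$j)
        = (q1$j + t1 *\<^sub>R (q2$j - q1$j)) - (q1$j + t2 *\<^sub>R (q2$j - q1$j))"
      by (simp add: algebra_simps)
    then have "(t1 - t2) *\<^sub>R (q2$j - q1$j) = 0" using a by simp
    moreover have "q2$j - q1$j \<noteq> 0" using a q(3) by auto
    ultimately show "t1 = t2" by simp
  qed
  then have fK: "finite K" unfolding K_def by auto
  have gB: "\<gamma> t \<in> B" if "t \<in> {0..1}" for t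
  proof -
    have "\<gamma> t = (1 - t) *\<^sub>R q1 + t *\<^sub>R q2" by (simp add: \<gamma>_def algebra_simps)
    then show ?thesis using B q that by (simp add: convex_alt)
  qed
  have cfg: "continuous_on {0..1} (\<lambda>t. f (\<gamma> t))"
    by (rule continuous_on_compose2[OF cf]) (use gB in \<open>auto simp: \<gamma>_def intro!: continuous_intros\<close>)
  have "(\<lambda>t. f (\<gamma> t)) 1 = f q1"
  proof (rule has_derivative_zero_unique_strong_interval[OF fK cfg])
    show "f (\<gamma> 0) = f q1" by (simp add: \<gamma>_def)
    fix x assume x: "x \<in> {0..1} - K"
    have nz: "\<forall>j. \<gamma> x $ j \<noteq> 0" using x by (auto simp: K_def)
    have dg: "(\<gamma> has_derivative (\<lambda>h. h *\<^sub>R (q2 - q1))) (at x)"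
      unfolding \<gamma>_def by (auto intro!: derivative_eq_intros)
    have "((\<lambda>t. f (\<gamma> t)) has_derivative (\<lambda>h. 0)) (at x)"
      using has_derivative_compose[OF dg der[OF gB nz]] x by simp
    then show "((\<lambda>t. f (\<gamma> t)) has_derivative (\<lambda>h. 0)) (at x within {0..1})"
      by (rule has_derivative_at_withinI)
  qed simp_all
  then show ?thesis by (simp add: \<gamma>_def)
qed

lemma constant_on_connected_if_fd_zero_off_hyperplanes:
  fixes f :: "complex^'n \<Rightarrow> real"
  assumes M: "open M" "connected M" and cf: "continuous_on M f"
    and der: "\<And>q. q \<in> M \<Longrightarrow> (\<forall>j. q$j \<noteq> 0) \<Longrightarrow> (f has_derivative (\<lambda>_. 0)) (at q)"
  shows "f constant_on M"
proof (rule locally_constant_imp_constant[OF M(2)])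
  fix a assume a: "a \<in> M"
  obtain r where r: "r > 0" "ball a r \<subseteq> M" using M(1) a open_contains_ball by blast
  obtain q1 where q1: "q1 \<in> ball a r" "\<forall>j. q1$j \<noteq> 0"
    using nonzero_coordinates_dense[OF open_ball centre_in_ball[THEN iffD2, OF r(1)] r(1)] by blast
  have cB: "continuous_on (ball a r) f" using cf r continuous_on_subset by blast
  have "f x = f q1" if "x \<in> ball a r" for x
  proof (rule continuous_on_eq_on_dense[OF open_ball cB continuous_on_const,
        where P="\<lambda>z. \<forall>j. z$j \<noteq> 0"])
    show "x \<in> ball a r" by fact
    fix z e assume "z \<in> ball a r" "(e::real) > 0"
    then show "\<exists>z'. (\<forall>j. z'$j \<noteq> 0) \<and> z' \<in> ball a r \<and> dist z' z < e"
      using nonzero_coordinates_dense[OF open_ball] by blast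
  next
    fix z assume "z \<in> ball a r" "\<forall>j. z$j \<noteq> 0"
    then show "f z = f q1"
      by (intro constant_along_segment[OF convex_ball cB _ q1(1) _ q1(2)]) (use der r in auto)
  qed
  then show "\<exists>T. openin (top_of_set M) T \<and> a \<in> T \<and> (\<forall>x\<in>T. f x = f a)"
    using r a by (intro exI[of _ "ball a r"]) (auto simp: open_subset)
qed

text \<open>Near a point with all coordinates nonzero, \<open>sqmod\<close> has the continuous local section
  \<open>y \<mapsto> (\<chi> j. (sqrt (y$j) / cmod (w$j)) * w$j)\<close>; hence \<open>tilde U\<close> is a neighbourhood of
  \<open>sqmod w\<close>, and partial derivatives there depend only on the values on \<open>tilde U\<close>.\<close>

lemma tilde_contains_ball:
  fixes w :: "complex^'n"
  assumes U: "open U" "w \<in> U" and nz: "\<forall>j. w$j \<noteq> 0"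
  shows "\<exists>e>0. ball (sqmod w) e \<subseteq> tilde U"
proof -
  define sec where "sec y = (\<chi> j. complex_of_real (sqrt (y$j) / cmod (w$j)) * w$j)" for y :: "real^'n"
  have sw: "sec (sqmod w) = w" using nz by (simp add: sec_def vec_eq_iff)
  have "continuous_on UNIV sec" unfolding sec_def
    by (intro continuous_intros continuous_on_vec_lambda) (use nz in auto)
  then have "isCont sec (sqmod w)" by (simp add: continuous_on_eq_continuous_at)
  moreover obtain r where r: "r > 0" "ball w r \<subseteq> U" using U open_contains_ball by blast
  ultimately obtain d where d: "d > 0" "\<And>y. dist y (sqmod w) < d \<Longrightarrow> dist (sec y) w < r"
    unfolding continuous_at_eps_delta sw by blast
  define m where "m = Min (range (\<lambda>j. (cmod (w$j))\<^sup>2))"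
  have m: "m > 0" unfolding m_def using nz by (subst Min_gr_iff) auto
  have mle: "m \<le> (cmod (w$j))\<^sup>2" for j unfolding m_def by (rule Min_le) auto
  have "ball (sqmod w) (min d m) \<subseteq> tilde U"
  proof
    fix y assume y: "y \<in> ball (sqmod w) (min d m)"
    have pos: "y$j > 0" for j
    proof -
      have "\<bar>(sqmod w - y) $ j\<bar> \<le> norm (sqmod w - y)" by (metis component_le_norm_cart real_norm_def)
      also have "\<dots> < m" using y by (simp add: dist_norm)
      finally have "\<bar>(cmod (w$j))\<^sup>2 - y$j\<bar> < m" by simp
      then show ?thesis using mle[of j] by linarith
    qed
    have "sec y \<in> U" using d(2)[of y] y r(2) by (auto simp: dist_commute)
    moreover have "sqmod (sec y) = y"
    proof (subst vec_eq_iff, intro allI)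
      fix j
      have "cmod (complex_of_real (sqrt (y$j) / cmod (w$j)) * w$j) = sqrt (y$j)"
        using nz pos[of j] by (simp add: norm_mult norm_divide del: of_real_divide)
      then show "sqmod (sec y) $ j = y $ j" using pos[of j] by (simp add: sec_def)
    qed
    ultimately show "y \<in> tilde U" unfolding tilde_def by (metis image_eqI)
  qed
  then show ?thesis using d m by (intro exI[of _ "min d m"]) auto
qed

lemma pdx_eq_on_tilde:
  assumes U: "open U" "w \<in> U" and nz: "\<forall>j. w$j \<noteq> 0"
    and dg: "g differentiable (at (sqmod w))" and eq: "\<forall>x\<in>tilde U. g x = G x"
  shows "pdx k G (sqmod w) = pdx k g (sqmod w)"
proof -
  obtain e where e: "e > 0" "ball (sqmod w) e \<subseteq> tilde U" using tilde_contains_ball[OF U nz] by blast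
  have "fd G (sqmod w) = fd g (sqmod w)"
    by (rule fd_transform_within_open[of "ball (sqmod w) e" "sqmod w" g G]) (use e eq dg in auto)
  then show ?thesis by (simp add: pdx_def)
qed

subsection \<open>Special maps between rotation invariant potentials\<close>

locale special_map_kahler =
  fixes M S :: "(complex^'n) set" and Phi Xi :: "complex^'n \<Rightarrow> real"
    and Phit Xit gP gX :: "real^'n \<Rightarrow> real" and UP UX :: "(real^'n) set"
    and psi :: "'n \<Rightarrow> real^'n \<Rightarrow> real"
  assumes M: "open M" "connected M" and S: "open S"
    and Phi_smooth: "smooth_on M Phi" and Xi_smooth: "smooth_on S Xi"
    and UP: "open UP" "tilde M \<subseteq> UP" "smooth_on UP gP" "\<forall>x\<in>tilde M. gP x = Phit x"
    and UX: "open UX" "tilde S \<subseteq> UX" "smooth_on UX gX" "\<forall>x\<in>tilde S. gX x = Xit x"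
    and Phi_eq: "\<forall>z\<in>M. Phi z = Phit (sqmod z)" and Xi_eq: "\<forall>z\<in>S. Xi z = Xit (sqmod z)"
    and Psi_smooth: "smooth_on M (special_map psi)" and Psi_into: "special_map psi ` M \<subseteq> S"
    and Phi_kahler: "\<forall>p\<in>M. \<forall>X. X \<noteq> 0 \<longrightarrow> kahler_form Phi p X (\<chi> j. \<i> * X $ j) > 0"
begin

abbreviation "Psi \<equiv> special_map psi"

definition "Mstar = {z\<in>M. \<forall>j. z$j \<noteq> 0}"

text \<open>With \<open>x = sqmod z\<close> and \<open>\<Psi> z\<close> off the coordinate hyperplanes, \<open>h k z\<close> is \<open>x\<^sub>k\<close> times
  the difference of the two sides of the identity in the theorem without the constant:
  the theorem says that each \<open>h k\<close> is constant.\<close>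

definition "HXi k z = sqmod (Psi z) $ k * pdx k gX (sqmod (Psi z))"
definition "HPhi k z = sqmod z $ k * pdx k gP (sqmod z)"
definition "h k z = HXi k z - HPhi k z"

lemma Psi_in_S: "z \<in> M \<Longrightarrow> Psi z \<in> S"
  using Psi_into by auto

lemma sqmod_in_UP: "z \<in> M \<Longrightarrow> sqmod z \<in> UP"
  using UP(2) by (auto simp: tilde_def)

lemma sqmod_in_UX: "w \<in> S \<Longrightarrow> sqmod w \<in> UX"
  using UX(2) by (auto simp: tilde_def)

lemma Phi_C2: "Ck_on 2 M Phi" and Xi_C2: "Ck_on 2 S Xi" and Psi_C2: "Ck_on 2 M Psi"
  using Phi_smooth Xi_smooth Psi_smooth smooth_on_imp_Ck_on by blast+

lemma gP_differentiable: "y \<in> UP \<Longrightarrow> gP differentiable (at y)" "y \<in> UP \<Longrightarrow> (\<lambda>y. fd gP y v) differentiable (at y)"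
  using Ck_on_2_differentiableD[OF UP(1) smooth_on_imp_Ck_on[OF UP(3)]] by blast+

lemma gX_differentiable: "y \<in> UX \<Longrightarrow> gX differentiable (at y)" "y \<in> UX \<Longrightarrow> (\<lambda>y. fd gX y v) differentiable (at y)"
  using Ck_on_2_differentiableD[OF UX(1) smooth_on_imp_Ck_on[OF UX(3)]] by blast+

lemma Psi_differentiable: "z \<in> M \<Longrightarrow> Psi differentiable (at z)"
  using Ck_on_2_differentiableD[OF M(1) Psi_C2] by blast

lemma HPhi_differentiable: "z \<in> M \<Longrightarrow> HPhi k differentiable (at z)"
  unfolding HPhi_def[abs_def] pdx_def
  by (intro differentiable_mult differentiable_sqmod_nth differentiable_compose[OF gP_differentiable(2)]
      sqmod_in_UP differentiable_sqmod)

lemma h_differentiable: "z \<in> M \<Longrightarrow> h k differentiable (at z)"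
  unfolding h_def[abs_def] HXi_def[abs_def] pdx_def
  by (intro differentiable_diff HPhi_differentiable differentiable_mult
      differentiable_compose[OF differentiable_sqmod_nth] differentiable_compose[OF gX_differentiable(2)]
      differentiable_compose[OF differentiable_sqmod] Psi_differentiable sqmod_in_UX Psi_in_S)

lemma continuous_on_h: "continuous_on M (h k)"
  using h_differentiable
  by (intro continuous_at_imp_continuous_on) (auto intro: differentiable_imp_continuous_within)

lemma h_rot: "h k (rot j t z) = h k z" and HPhi_rot: "HPhi k (rot j t z) = HPhi k z"
  by (simp_all add: h_def HXi_def HPhi_def special_map_rot del: sqmod_nth)

lemma open_Mstar: "open Mstar"
proof -
  have "Mstar = M \<inter> (\<Inter>j. {z. z$j \<noteq> 0})" by (auto simp: Mstar_def)
  moreover have "open (\<Inter>j. {z::complex^'n. z$j \<noteq> 0})"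
    by (rule open_INT) (auto intro!: open_Collect_neq continuous_intros)
  ultimately show ?thesis using M(1) by auto
qed

lemma Mstar_M: "z \<in> Mstar \<Longrightarrow> z \<in> M" and Mstar_nonzero: "z \<in> Mstar \<Longrightarrow> z$j \<noteq> 0"
  by (simp_all add: Mstar_def)

lemma Mstar_dense: "z \<in> M \<Longrightarrow> e > 0 \<Longrightarrow> \<exists>z'\<in>Mstar. dist z' z < e"
  using nonzero_coordinates_dense[OF M(1)] by (fastforce simp: Mstar_def)

lemma dc_Phi_eq:
  assumes z: "z \<in> Mstar"
  shows "dc Phi z Y = (\<Sum>k\<in>UNIV. 2 * HPhi k z * Im (Y$k / z$k))"
proof -
  have "\<And>z. z \<in> M \<Longrightarrow> Phi z = gP (sqmod z)" using Phi_eq UP(4) by (auto simp: tilde_def)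
  from dc_rotation_invariant[OF M(1) Mstar_M[OF z] this gP_differentiable(1)[OF sqmod_in_UP[OF Mstar_M[OF z]]]]
  show ?thesis
    unfolding HPhi_def Im_cnj_mult[OF Mstar_nonzero[OF z]] by (simp add: ac_simps)
qed

text \<open>\<open>\<Psi>\<^sub>k = r z\<^sub>k\<close> with \<open>r\<close> real, so \<open>d\<Psi>\<^sub>k = (dr) z\<^sub>k + r dz\<^sub>k\<close> and the first term drops out
  of \<open>Im (cnj \<Psi>\<^sub>k d\<Psi>\<^sub>k)\<close>.\<close>

lemma Im_cnj_Psi_nth_fd:
  assumes z: "z \<in> Mstar"
  shows "Im (cnj (Psi z $ k) * (fd Psi z Y $ k)) = (cmod (Psi z $ k))\<^sup>2 * Im (Y$k / z$k)"
proof -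
  have zk: "z$k \<noteq> 0" using Mstar_nonzero[OF z] .
  define r where "r w = Re (Psi w $ k / w $ k)" for w
  have Pk: "Psi w $ k = of_real (r w) * w$k" if "w$k \<noteq> 0" for w
    using that by (simp add: r_def special_map_def)
  have dP: "((\<lambda>w. Psi w $ k) has_derivative (\<lambda>Y. fd Psi z Y $ k)) (at z)"
    using bounded_linear.has_derivative[OF bounded_linear_vec_nth
        has_derivative_fd[OF Psi_differentiable[OF Mstar_M[OF z]]]] .
  have dk: "((\<lambda>w::complex^'n. w$k) has_derivative (\<lambda>Y. Y$k)) (at z)"
    by (rule bounded_linear_imp_has_derivative[OF bounded_linear_vec_nth])
  obtain r' where dr: "(r has_derivative r') (at z)"
    using bounded_linear.has_derivative[OF bounded_linear_Re has_derivative_divide'[OF dP dk zk]]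
    unfolding r_def by blast
  have d2: "((\<lambda>w. of_real (r w) * w$k) has_derivative
      (\<lambda>Y. of_real (r' Y) * z$k + of_real (r z) * Y$k)) (at z)"
    using has_derivative_mult[OF bounded_linear.has_derivative[OF bounded_linear_of_real dr] dk]
    by (simp add: algebra_simps)
  have op: "open {w::complex^'n. w$k \<noteq> 0}" by (auto intro!: open_Collect_neq continuous_intros)
  have "((\<lambda>w. Psi w $ k) has_derivative (\<lambda>Y. of_real (r' Y) * z$k + of_real (r z) * Y$k)) (at z)"
    by (rule has_derivative_transform_within_open[OF d2 op]) (auto simp: Pk zk)
  then have "(\<lambda>Y. fd Psi z Y $ k) = (\<lambda>Y. of_real (r' Y) * z$k + of_real (r z) * Y$k)"
    by (rule has_derivative_unique[OF dP])
  then have eq: "fd Psi z Y $ k = of_real (r' Y) * z$k + of_real (r z) * Y$k"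
    by (rule fun_cong)
  have "Im (cnj (of_real (r z) * z$k) * (of_real (r' Y) * z$k + of_real (r z) * Y$k))
      = (r z)\<^sup>2 * Im (cnj (z$k) * Y$k)"
    by (simp add: algebra_simps power2_eq_square)
  also have "\<dots> = (cmod (of_real (r z) * z$k))\<^sup>2 * Im (Y$k / z$k)"
    unfolding Im_cnj_mult[OF zk] by (simp add: norm_mult power_mult_distrib)
  finally show ?thesis unfolding eq Pk[OF zk] .
qed

lemma pullback1_dc_Xi_eq:
  assumes z: "z \<in> Mstar"
  shows "pullback1 Psi (dc Xi) z Y = (\<Sum>k\<in>UNIV. 2 * HXi k z * Im (Y$k / z$k))"
proof -
  have zM: "z \<in> M" using Mstar_M[OF z] .
  have "\<And>w. w \<in> S \<Longrightarrow> Xi w = gX (sqmod w)" using Xi_eq UX(4) by (auto simp: tilde_def)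
  then have "pullback1 Psi (dc Xi) z Y
      = (\<Sum>k\<in>UNIV. 2 * pdx k gX (sqmod (Psi z)) * Im (cnj (Psi z $ k) * fd Psi z Y $ k))"
    unfolding pullback1_def
    by (rule dc_rotation_invariant[OF S Psi_in_S[OF zM] _ gX_differentiable(1)[OF sqmod_in_UX[OF Psi_in_S[OF zM]]]])
  then show ?thesis
    unfolding Im_cnj_Psi_nth_fd[OF z] HXi_def by (simp add: ac_simps)
qed

lemma pullback1_dc_Xi_differentiable: "p \<in> M \<Longrightarrow> (\<lambda>z. pullback1 Psi (dc Xi) z Y) differentiable (at p)"
  using has_derivative_pullback1_dc[OF M(1) _ S Psi_C2 Xi_C2 Psi_in_S] by (auto simp: differentiable_def)

lemma dc_Phi_differentiable: "p \<in> M \<Longrightarrow> (\<lambda>z. dc Phi z Y) differentiable (at p)"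
  unfolding dc_def
  by (intro differentiable_minus Ck_on_2_differentiableD(2)[OF M(1) Phi_C2])

lemma pullback_minus_kahler_form_eq:
  assumes p: "p \<in> Mstar"
  shows "4 * (pullback Psi (kahler_form Xi) p X Y - kahler_form Phi p X Y) =
    2 * (\<Sum>k\<in>UNIV. fd (h k) p X * Im (Y$k / p$k) - fd (h k) p Y * Im (X$k / p$k))"
proof -
  define \<gamma> where "\<gamma> z V = pullback1 Psi (dc Xi) z V - dc Phi z V" for z V
  have pM: "p \<in> M" using Mstar_M[OF p] .
  have fd_\<gamma>: "fd (\<lambda>z. \<gamma> z V) p W = fd (\<lambda>z. pullback1 Psi (dc Xi) z V) p W - fd (\<lambda>z. dc Phi z V) p W"
    for V W
    unfolding \<gamma>_def
    using fd_eqI[OF has_derivative_diff[OF has_derivative_fd[OF pullback1_dc_Xi_differentiable[OF pM]]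
          has_derivative_fd[OF dc_Phi_differentiable[OF pM]]]]
    by simp
  have "pullback Psi (kahler_form Xi) p X Y = ext_deriv (pullback1 Psi (dc Xi)) p X Y / 4"
    by (rule pullback_kahler_form_eq_ext_deriv[OF M(1) pM S Psi_C2 Xi_C2 Psi_in_S])
  moreover have "kahler_form Phi p X Y = ext_deriv (dc Phi) p X Y / 4"
    by (rule kahler_form_eq_ext_deriv_dc[OF M(1) pM Phi_C2])
  ultimately have "4 * (pullback Psi (kahler_form Xi) p X Y - kahler_form Phi p X Y) = ext_deriv \<gamma> p X Y"
    unfolding ext_deriv_def fd_\<gamma> by simp
  also have "\<dots> = 2 * (\<Sum>k\<in>UNIV. fd (h k) p X * Im (Y$k / p$k) - fd (h k) p Y * Im (X$k / p$k))"
  proof (rule ext_deriv_angular_form[OF open_Mstar p Mstar_nonzero[OF p] _ h_differentiable[OF pM]])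
    fix z V assume "z \<in> Mstar"
    then show "\<gamma> z V = (\<Sum>k\<in>UNIV. 2 * h k z * Im (V$k / z$k))"
      unfolding \<gamma>_def pullback1_dc_Xi_eq[OF \<open>z \<in> Mstar\<close>] dc_Phi_eq[OF \<open>z \<in> Mstar\<close>] h_def
      by (simp add: sum_subtractf[symmetric] algebra_simps)
  qed
  finally show ?thesis .
qed

lemma kahler_form_Phi_eq:
  assumes p: "p \<in> Mstar"
  shows "4 * kahler_form Phi p X Y =
    2 * (\<Sum>k\<in>UNIV. fd (HPhi k) p X * Im (Y$k / p$k) - fd (HPhi k) p Y * Im (X$k / p$k))"
  unfolding kahler_form_eq_ext_deriv_dc[OF M(1) Mstar_M[OF p] Phi_C2]
  using ext_deriv_angular_form[OF open_Mstar p Mstar_nonzero[OF p] dc_Phi_eq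
      HPhi_differentiable[OF Mstar_M[OF p]]]
  by simp

text \<open>Pairing with the rotation generator \<open>J (p\<^sub>k e\<^sub>k)\<close> isolates \<open>dh\<^sub>k\<close>, since all \<open>h\<^sub>j\<close>
  are rotation invariant and \<open>Im ((J (p\<^sub>k e\<^sub>k))\<^sub>j / p\<^sub>j) = \<delta>\<^sub>j\<^sub>k\<close>.\<close>

lemma sum_angular_rotation_generator:
  fixes H :: "'n \<Rightarrow> complex^'n \<Rightarrow> real"
  assumes p: "p \<in> Mstar" and dH: "\<And>j. H j differentiable (at p)" and rot: "\<And>j t z. H j (rot k t z) = H j z"
  shows "(\<Sum>j\<in>UNIV. fd (H j) p X * Im (axis k (\<i> * p$k) $ j / p$j)
      - fd (H j) p (axis k (\<i> * p$k)) * Im (X$j / p$j)) = fd (H k) p X"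
proof -
  have "fd (H j) p (axis k (\<i> * p$k)) = 0" for j
    by (rule fd_rotation_invariant[OF dH]) (simp add: rot)
  then have "(\<Sum>j\<in>UNIV. fd (H j) p X * Im (axis k (\<i> * p$k) $ j / p$j)
      - fd (H j) p (axis k (\<i> * p$k)) * Im (X$j / p$j)) = (\<Sum>j\<in>UNIV. if j = k then fd (H j) p X else 0)"
    using Mstar_nonzero[OF p] by (intro sum.cong) (auto simp: axis_def)
  then show ?thesis by simp
qed

lemma pullback_minus_kahler_form_rotation:
  "p \<in> Mstar \<Longrightarrow> 2 * (pullback Psi (kahler_form Xi) p X (axis k (\<i> * p$k))
     - kahler_form Phi p X (axis k (\<i> * p$k))) = fd (h k) p X"
  using pullback_minus_kahler_form_eq[of p X "axis k (\<i> * p$k)"]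
    sum_angular_rotation_generator[OF _ h_differentiable[OF Mstar_M] h_rot]
  by simp

lemma kahler_form_Phi_rotation:
  "p \<in> Mstar \<Longrightarrow> 2 * kahler_form Phi p X (axis k (\<i> * p$k)) = fd (HPhi k) p X"
  using kahler_form_Phi_eq[of p X "axis k (\<i> * p$k)"]
    sum_angular_rotation_generator[OF _ HPhi_differentiable[OF Mstar_M] HPhi_rot]
  by simp

lemma kahler_form_Phi_rotation_pos:
  assumes p: "p \<in> Mstar"
  shows "kahler_form Phi p (axis k (p$k)) (axis k (\<i> * p$k)) > 0"
proof -
  have "axis k (p$k) \<noteq> 0" using Mstar_nonzero[OF p] by (simp add: axis_eq_0_iff)
  then have "kahler_form Phi p (axis k (p$k)) (cJ (axis k (p$k))) > 0"
    using Phi_kahler Mstar_M[OF p] unfolding cJ_def by blast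
  then show ?thesis by (simp add: cJ_axis)
qed

lemma sqmod_Psi: "sqmod (Psi z) = (\<chi> j. (psi j (sqmod z))\<^sup>2 * sqmod z $ j)"
  by (simp add: vec_eq_iff special_map_def norm_mult power_mult_distrib)

lemma Mstar_sqmod_in_tilde: "z \<in> Mstar \<Longrightarrow> sqmod z \<in> tilde M" and Mstar_sqmod_pos: "z \<in> Mstar \<Longrightarrow> sqmod z $ j > 0"
  by (simp_all add: tilde_def Mstar_def)

lemma pdx_Phit_eq: "z \<in> Mstar \<Longrightarrow> pdx k Phit (sqmod z) = pdx k gP (sqmod z)"
  using pdx_eq_on_tilde[OF M(1) Mstar_M _ gP_differentiable(1)[OF sqmod_in_UP[OF Mstar_M]] UP(4)]
    Mstar_nonzero by blast

lemma pdx_Xit_eq: "z \<in> Mstar \<Longrightarrow> \<forall>j. Psi z $ j \<noteq> 0 \<Longrightarrow>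
   pdx k Xit (sqmod (Psi z)) = pdx k gX (sqmod (Psi z))"
  using pdx_eq_on_tilde[OF S Psi_in_S[OF Mstar_M] _ gX_differentiable(1)[OF sqmod_in_UX[OF Psi_in_S[OF Mstar_M]]] UX(4)]
  by blast

lemma h_eq_identity_defect:
  assumes "z \<in> Mstar" "\<forall>j. Psi z $ j \<noteq> 0"
  shows "h k z = sqmod z $ k * ((psi k (sqmod z))\<^sup>2 * pdx k Xit (sqmod (Psi z)) - pdx k Phit (sqmod z))"
  unfolding h_def HXi_def HPhi_def pdx_Xit_eq[OF assms] pdx_Phit_eq[OF assms(1)]
  by (simp add: sqmod_Psi algebra_simps del: sqmod_nth)

lemma continuous_on_Psi: "continuous_on M Psi" and continuous_on_fd_Psi: "continuous_on M (\<lambda>p. fd Psi p X)"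
  using Psi_C2 by (auto intro: differentiable_imp_continuous_on simp: Ck_on_2_iff)

lemma continuous_on_pullback: "continuous_on M (\<lambda>p. pullback Psi (kahler_form Xi) p X Y)"
proof -
  note continuous_on_Psi continuous_on_fd_Psi
  then show ?thesis
    unfolding pullback_def using Psi_into
    by (intro continuous_on_kahler_form[OF S Xi_C2]) auto
qed

lemma continuous_on_kahler_form_Phi: "continuous_on M (\<lambda>p. kahler_form Phi p X Y)"
  using continuous_on_kahler_form[OF M(1) Phi_C2 continuous_on_id _ continuous_on_const continuous_on_const,
      of M X Y]
  by simp

subsection \<open>Pullback identity implies the differential identity\<close>

context
  assumes pullback_eq: "\<forall>p\<in>M. \<forall>X Y. pullback Psi (kahler_form Xi) p X Y = kahler_form Phi p X Y"
begin

lemma Psi_nth_nonzero: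
  assumes p: "p \<in> Mstar"
  shows "Psi p $ k \<noteq> 0"
proof
  assume "Psi p $ k = 0"
  then have "fd Psi p (axis k (\<i> * p$k)) = 0"
    using fd_special_map_rotation[OF Psi_differentiable[OF Mstar_M[OF p]]] by simp
  then have "pullback Psi (kahler_form Xi) p (axis k (p$k)) (axis k (\<i> * p$k)) = 0"
    by (simp add: pullback_def)
  then show False
    using kahler_form_Phi_rotation_pos[OF p, of k] pullback_eq Mstar_M[OF p] by simp
qed

lemma h_constant: "\<exists>c. \<forall>z\<in>M. h k z = c"
proof -
  have "h k constant_on M"
  proof (rule constant_on_connected_if_fd_zero_off_hyperplanes[OF M continuous_on_h])
    fix q assume q: "q \<in> M" "\<forall>j. q$j \<noteq> 0"
    then have "q \<in> Mstar" by (simp add: Mstar_def)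
    then have "fd (h k) q X = 0" for X
      using pullback_minus_kahler_form_rotation[of q X k] pullback_eq q(1) by simp
    then have "fd (h k) q = (\<lambda>_. 0)" by auto
    then show "(h k has_derivative (\<lambda>_. 0)) (at q)"
      using has_derivative_fd[OF h_differentiable[of q k, OF q(1)]] by simp
  qed
  then show ?thesis by (auto simp: constant_on_def)
qed

lemma identity_if_pullback_eq:
  "\<exists>c :: 'n \<Rightarrow> real. \<forall>x\<in>tilde M. (\<forall>j. x $ j > 0) \<longrightarrow> (\<forall>k.
     (psi k x)\<^sup>2 * pdx k Xit (\<chi> j. (psi j x)\<^sup>2 * x $ j) = pdx k Phit x + c k / x $ k)"
proof -
  obtain c where c: "\<And>k z. z \<in> M \<Longrightarrow> h k z = c k"
    using h_constant by metis
  show ?thesis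
  proof (intro exI[of _ c] ballI impI allI)
    fix x k assume x: "x \<in> tilde M" "\<forall>j. x $ j > 0"
    obtain z where z: "z \<in> M" "x = sqmod z" using x(1) by (auto simp: tilde_def)
    have "z \<in> Mstar" using z x(2) by (auto simp: Mstar_def)
    with c[OF z(1)] have "x $ k * ((psi k x)\<^sup>2 * pdx k Xit (\<chi> j. (psi j x)\<^sup>2 * x $ j) - pdx k Phit x) = c k"
      using h_eq_identity_defect Psi_nth_nonzero z(2) by (simp add: sqmod_Psi del: sqmod_nth)
    moreover have "x $ k > 0" using x(2) by blast
    ultimately show "(psi k x)\<^sup>2 * pdx k Xit (\<chi> j. (psi j x)\<^sup>2 * x $ j) = pdx k Phit x + c k / x $ k"
      by (simp add: field_simps)
  qed
qed

end

subsection \<open>The differential identity implies the pullback identity\<close>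

context
  fixes c :: "'n \<Rightarrow> real"
  assumes identity: "\<forall>x\<in>tilde M. (\<forall>j. x $ j > 0) \<longrightarrow> (\<forall>k.
           (psi k x)\<^sup>2 * pdx k Xit (\<chi> j. (psi j x)\<^sup>2 * x $ j) = pdx k Phit x + c k / x $ k)"
begin

lemma identity_at:
  "z \<in> Mstar \<Longrightarrow> (psi k (sqmod z))\<^sup>2 * pdx k Xit (sqmod (Psi z)) = pdx k Phit (sqmod z) + c k / sqmod z $ k"
  using identity Mstar_sqmod_in_tilde Mstar_sqmod_pos unfolding sqmod_Psi by (simp del: sqmod_nth)

lemma h_eq_const_if_Psi_nonzero:
  "z \<in> Mstar \<Longrightarrow> \<forall>j. Psi z $ j \<noteq> 0 \<Longrightarrow> h k z = c k"
  using h_eq_identity_defect identity_at Mstar_sqmod_pos[of z k] by (simp add: field_simps del: sqmod_nth)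

text \<open>Where \<open>\<Psi>\<^sub>k\<close> vanishes, \<open>\<psi>\<^sub>k = 0\<close> and the identity makes \<open>x\<^sub>k \<partial>\<^sub>k\<Phi>\<close> constant; this is
  ruled out on open sets by positivity of the Kaehler form.\<close>

lemma HPhi_eq_if_Psi_nth_zero:
  assumes z: "z \<in> Mstar" and "Psi z $ k = 0"
  shows "HPhi k z = - c k"
proof -
  have "psi k (sqmod z) = 0" using assms Mstar_nonzero[OF z, of k] by (simp add: special_map_def)
  then have "0 = pdx k Phit (sqmod z) + c k / sqmod z $ k" using identity_at[OF z, of k] by simp
  then show ?thesis
    unfolding HPhi_def pdx_Phit_eq[OF z, symmetric] using Mstar_sqmod_pos[OF z, of k]
    by (simp add: field_simps del: sqmod_nth)
qed

lemma Psi_nth_not_identically_zero: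
  assumes W: "open W" "W \<subseteq> Mstar" "p \<in> W"
  shows "\<exists>z\<in>W. Psi z $ k \<noteq> 0"
proof (rule ccontr)
  assume "\<not> ?thesis"
  then have "\<And>z. z \<in> W \<Longrightarrow> - c k = HPhi k z"
    using HPhi_eq_if_Psi_nth_zero W(2) by auto
  then have "(HPhi k has_derivative (\<lambda>_. 0)) (at p)"
    by (rule has_derivative_transform_within_open[OF has_derivative_const W(1) W(3)])
  then have "fd (HPhi k) p = (\<lambda>_. 0)" by (rule fd_eqI)
  then have "kahler_form Phi p (axis k (p$k)) (axis k (\<i> * p$k)) = 0"
    using kahler_form_Phi_rotation[of p "axis k (p$k)" k] W by auto
  then show False using kahler_form_Phi_rotation_pos[of p k] W by auto
qed

lemma Psi_nonzero_somewhere: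
  assumes "finite F"
  shows "open W \<Longrightarrow> W \<subseteq> Mstar \<Longrightarrow> W \<noteq> {} \<Longrightarrow> \<exists>z\<in>W. \<forall>j\<in>F. Psi z $ j \<noteq> 0"
  using assms
proof (induction F arbitrary: W rule: finite_induct)
  case empty
  then show ?case by auto
next
  case (insert j F)
  define W1 where "W1 = W \<inter> (\<lambda>z. Psi z $ j) -` (- {0})"
  have "W \<subseteq> M" using insert.prems(2) Mstar_M by blast
  then have "continuous_on W (\<lambda>z. Psi z $ j)"
    by (intro continuous_on_vec_nth continuous_on_subset[OF continuous_on_Psi])
  then have "open W1" unfolding W1_def
    by (rule continuous_open_preimage[OF _ insert.prems(1)]) (simp add: open_Compl)
  moreover have "W1 \<subseteq> Mstar" using insert.prems(2) by (auto simp: W1_def)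
  moreover have "W1 \<noteq> {}"
  proof -
    obtain p where "p \<in> W" using insert.prems(3) by blast
    then obtain z where "z \<in> W" "Psi z $ j \<noteq> 0"
      using Psi_nth_not_identically_zero[OF insert.prems(1,2)] by blast
    then show ?thesis by (auto simp: W1_def)
  qed
  ultimately obtain z where "z \<in> W1" "\<forall>i\<in>F. Psi z $ i \<noteq> 0"
    using insert.IH by blast
  then show ?case by (auto simp: W1_def)
qed

lemma h_eq_const: "z \<in> M \<Longrightarrow> h k z = c k"
proof (rule continuous_on_eq_on_dense[OF M(1) continuous_on_h continuous_on_const,
      where P="\<lambda>z. z \<in> Mstar \<and> (\<forall>j. Psi z $ j \<noteq> 0)"])
  fix z e assume "z \<in> M" "(e::real) > 0"
  then obtain z1 where "z1 \<in> Mstar" "dist z1 z < e"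
    using Mstar_dense by blast
  then have "z1 \<in> ball z e \<inter> Mstar" by (simp add: dist_commute)
  then have "ball z e \<inter> Mstar \<noteq> {}" by blast
  then obtain z' where "z' \<in> ball z e \<inter> Mstar" "\<forall>j\<in>UNIV. Psi z' $ j \<noteq> 0"
    using Psi_nonzero_somewhere[of UNIV "ball z e \<inter> Mstar"] finite open_Mstar
    by (meson inf_le2 open_Int open_ball)
  then show "\<exists>z'. (z' \<in> Mstar \<and> (\<forall>j. Psi z' $ j \<noteq> 0)) \<and> z' \<in> M \<and> dist z' z < e"
    by (auto simp: Mstar_def dist_commute)
qed (auto intro: h_eq_const_if_Psi_nonzero)

lemma pullback_eq_if_identity:
  "\<forall>p\<in>M. \<forall>X Y. pullback Psi (kahler_form Xi) p X Y = kahler_form Phi p X Y"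
proof (intro ballI allI)
  fix p X Y assume p: "p \<in> M"
  show "pullback Psi (kahler_form Xi) p X Y = kahler_form Phi p X Y"
  proof (rule continuous_on_eq_on_dense[OF M(1) continuous_on_pullback continuous_on_kahler_form_Phi,
        where P="\<lambda>z. z \<in> Mstar"])
    fix z e assume "z \<in> M" "(e::real) > 0"
    then show "\<exists>z'. z' \<in> Mstar \<and> z' \<in> M \<and> dist z' z < e"
      using Mstar_dense Mstar_M by blast
  next
    fix q assume "q \<in> M" "q \<in> Mstar"
    then have "fd (h k) q = (\<lambda>_. 0)" for k
      by (intro fd_eqI has_derivative_transform_within_open[OF has_derivative_const M(1)])
         (auto simp: h_eq_const)
    then show "pullback Psi (kahler_form Xi) q X Y = kahler_form Phi q X Y"
      using pullback_minus_kahler_form_eq[OF \<open>q \<in> Mstar\<close>, of X Y] by simp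
  qed (rule p)
qed

end

end

theorem lemma2p1:
  fixes M S :: "(complex^'n) set"
    and Phi Xi :: "complex^'n \<Rightarrow> real"
    and Phit Xit :: "real^'n \<Rightarrow> real"
    and psi :: "'n \<Rightarrow> real^'n \<Rightarrow> real"
  assumes "is_domain M" and "is_domain S"
    and "is_kahler_on M Phi" and "is_kahler_on S Xi"
    and "rot_inv_assoc M Phi Phit" and "rot_inv_assoc S Xi Xit"
    and "smooth_on M (special_map psi)"
    and "special_map psi ` M \<subseteq> S"
  shows "(\<forall>p\<in>M. \<forall>X Y. pullback (special_map psi) (kahler_form Xi) p X Y = kahler_form Phi p X Y)
     \<longleftrightarrow> (\<exists>c :: 'n \<Rightarrow> real. \<forall>x\<in>tilde M. (\<forall>j. x $ j > 0) \<longrightarrow> (\<forall>k.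
           (psi k x)\<^sup>2 * pdx k Xit (\<chi> j. (psi j x)\<^sup>2 * x $ j) = pdx k Phit x + c k / x $ k))"
proof -
  obtain UP gP UX gX where
    "open UP" "tilde M \<subseteq> UP" "smooth_on UP gP" "\<forall>x\<in>tilde M. gP x = Phit x"
    "open UX" "tilde S \<subseteq> UX" "smooth_on UX gX" "\<forall>x\<in>tilde S. gX x = Xit x"
    using assms(5,6) unfolding rot_inv_assoc_def smooth_on_set_def by metis
  then interpret special_map_kahler M S Phi Xi Phit Xit gP gX UP UX psi
    using assms by unfold_locales (auto simp: is_domain_def is_kahler_on_def rot_inv_assoc_def)
  show ?thesis
    using identity_if_pullback_eq pullback_eq_if_identity by blast
qed

end
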